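(* Let $\mathfrak{g}=\mathfrak{so}_{2r+1}$, $r\geqslant 3$, with root system $\{\pm\varepsilon_i\pm\varepsilon_j,\pm\varepsilon_i\}$, positive roots $\{\varepsilon_i\pm\varepsilon_j\ (i<j),\ \varepsilon_k\}$, simple roots $\alpha_1,\dots,\alpha_r$ (Bourbaki numbering), and fix a Chevalley basis with root vectors $e_\alpha$. Let $\theta$ be the highest root, $\theta_2$ the highest root of the subsystem generated by $\alpha_3,\dots,\alpha_r$, $\beta_1=\alpha_2$, $\delta_1=\alpha_1+\alpha_2+\alpha_3$, $\beta_2=\alpha_2+\alpha_3$, $\delta_2=\alpha_1+\alpha_2$, and $$w_2=e_\theta e_{\theta_2}-\sum_{j=1}^2 e_{\beta_j+\theta_2}e_{\delta_j+\theta_2}\in S^2(\mathfrak{g}).$$ Let $W_2\subset S^2(\mathfrak{g})$ be the $\mathfrak{g}$-submodule (under the adjoint action) generated by $w_2$, and let $V(W_2)\subset\mathfrak{g}^*\cong\mathfrak{g}$ be the zero locus of the ideal of $S(\mathfrak{g})$ generated by $W_2$. Let $\mathcal{N}$ be the nilpotent cone of $\mathfrak{g}$. Then $V(W_2)\cap\mathcal{N}\subset\overline{\mathbb{O}_{(3,1^{2r-2})}}$.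
   Context: $w_2$ is a highest weight vector for the adjoint action, generating an irreducible module $W_2$ of highest weight $\theta+\theta_2$. $\mathbb{O}_{(3,1^{2r-2})}$ denotes the nilpotent orbit of $\mathfrak{so}_{2r+1}$ with Jordan type $(3,1^{2r-2})$ in the natural representation; $\mathfrak{g}^*$ is identified with $\mathfrak{g}$ via the normalized invariant form. *)

theory Defs
  imports Complex_Main "HOL-Library.Function_Algebras" "Jordan_Normal_Form.Jordan_Normal_Form"
begin

text \<open>The index of the weight vector of weight eps_i (1 <= i <= r)
  is i - 1, that of weight -eps_i is 2r + 1 - i, and the zero weight vector has index r.
  The Cartan subalgebra is the diagonal one.\<close>

definition nat_dim :: "nat \<Rightarrow> nat" where
  "nat_dim r = 2 * r + 1"

definition Jform :: "nat \<Rightarrow> complex mat" where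
  "Jform r = mat (nat_dim r) (nat_dim r) (\<lambda>(p, q). if p + q = 2 * r then 1 else 0)"

definition so_alg :: "nat \<Rightarrow> complex mat set" where
  "so_alg r = {X \<in> carrier_mat (nat_dim r) (nat_dim r).
                 transpose_mat X * Jform r = - (Jform r * X)}"

definition lie_bracket :: "complex mat \<Rightarrow> complex mat \<Rightarrow> complex mat" where
  "lie_bracket X Y = X * Y - Y * X"

text \<open>Normalized invariant form on so(2r+1) (long roots have square length 2):
  (X, Y) = tr(XY) / 2.\<close>
definition mat_trace :: "complex mat \<Rightarrow> complex" where
  "mat_trace X = (\<Sum>i<dim_row X. X $$ (i, i))"

definition inv_form :: "complex mat \<Rightarrow> complex mat \<Rightarrow> complex" where
  "inv_form X Y = mat_trace (X * Y) / 2"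

definition unit_mat :: "nat \<Rightarrow> nat \<Rightarrow> nat \<Rightarrow> complex mat" where
  "unit_mat n a b = mat n n (\<lambda>(p, q). if p = a \<and> q = b then 1 else 0)"

definition pos_idx :: "nat \<Rightarrow> nat \<Rightarrow> nat" where "pos_idx r i = i - 1"
definition neg_idx :: "nat \<Rightarrow> nat \<Rightarrow> nat" where "neg_idx r i = 2 * r + 1 - i"
definition mid_idx :: "nat \<Rightarrow> nat" where "mid_idx r = r"

text \<open>Weights are integer vectors in epsilon-coordinates, i.e. functions nat => int
  (coordinate i = coefficient of eps_i).\<close>

definition eps :: "nat \<Rightarrow> nat \<Rightarrow> int" where
  "eps i = (\<lambda>k. if k = i then 1 else 0)"

definition simple_root :: "nat \<Rightarrow> nat \<Rightarrow> nat \<Rightarrow> int" where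
  "simple_root r k = (if k < r then eps k - eps (k + 1) else eps r)"

text \<open>Positive root vectors of the fixed Chevalley basis:
   e_(eps_i - eps_j) = E(i,j) - E(-j,-i)                 (i < j)
   e_(eps_i + eps_j) = s_ij (E(i,-j) - E(j,-i))          (i < j), s_23 = -1, s_ij = 1 otherwise
   e_(eps_i)         = sqrt 2 (E(i,0) - E(0,-i)).
  Together with e_(-(eps_i - eps_j)) = E(j,i) - E(-i,-j),
  e_(-(eps_i + eps_j)) = s_ij (E(-j,i) - E(-i,j)), e_(-eps_i) = sqrt 2 (E(0,i) - E(-i,0))
  this is a Chevalley basis; the sign s_23 is chosen so that w_2 is a highest weight vector.\<close>

definition e_minus :: "nat \<Rightarrow> nat \<Rightarrow> nat \<Rightarrow> complex mat" where
  "e_minus r i j = unit_mat (nat_dim r) (pos_idx r i) (pos_idx r j)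
                 - unit_mat (nat_dim r) (neg_idx r j) (neg_idx r i)"

definition e_plus :: "nat \<Rightarrow> nat \<Rightarrow> nat \<Rightarrow> complex mat" where
  "e_plus r i j = (if (i, j) = (2, 3) then -1 else 1) \<cdot>\<^sub>m
                 (unit_mat (nat_dim r) (pos_idx r i) (neg_idx r j)
                 - unit_mat (nat_dim r) (pos_idx r j) (neg_idx r i))"

definition e_short :: "nat \<Rightarrow> nat \<Rightarrow> complex mat" where
  "e_short r i = complex_of_real (sqrt 2) \<cdot>\<^sub>m
                 (unit_mat (nat_dim r) (pos_idx r i) (mid_idx r)
                 - unit_mat (nat_dim r) (mid_idx r) (neg_idx r i))"

text \<open>Root vector e_alpha for a positive root alpha of B_r (0 for non-roots; never used).\<close>
definition root_vec :: "nat \<Rightarrow> (nat \<Rightarrow> int) \<Rightarrow> complex mat" where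
  "root_vec r \<alpha> =
    (if \<exists>i j. 1 \<le> i \<and> i < j \<and> j \<le> r \<and> \<alpha> = eps i - eps j then
       (case (SOME (i, j). 1 \<le> i \<and> i < j \<and> j \<le> r \<and> \<alpha> = eps i - eps j) of (i, j) \<Rightarrow> e_minus r i j)
     else if \<exists>i j. 1 \<le> i \<and> i < j \<and> j \<le> r \<and> \<alpha> = eps i + eps j then
       (case (SOME (i, j). 1 \<le> i \<and> i < j \<and> j \<le> r \<and> \<alpha> = eps i + eps j) of (i, j) \<Rightarrow> e_plus r i j)
     else if \<exists>i. 1 \<le> i \<and> i \<le> r \<and> \<alpha> = eps i then
       e_short r (SOME i. 1 \<le> i \<and> i \<le> r \<and> \<alpha> = eps i)
     else 0\<^sub>m (nat_dim r) (nat_dim r))"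

text \<open>theta = highest root of B_r = eps_1 + eps_2.  theta_2 = highest root of the subsystem
  generated by alpha_3, ..., alpha_r (of type B_(r-2) on eps_3, ..., eps_r): this is
  eps_3 + eps_4 if r >= 4, and eps_3 = alpha_3 if r = 3 (type A_1).\<close>
definition theta :: "nat \<Rightarrow> nat \<Rightarrow> int" where
  "theta r = eps 1 + eps 2"

definition theta2 :: "nat \<Rightarrow> nat \<Rightarrow> int" where
  "theta2 r = (if r = 3 then eps 3 else eps 3 + eps 4)"

definition beta1 :: "nat \<Rightarrow> nat \<Rightarrow> int" where "beta1 r = simple_root r 2"
definition delta1 :: "nat \<Rightarrow> nat \<Rightarrow> int" where
  "delta1 r = simple_root r 1 + simple_root r 2 + simple_root r 3"
definition beta2 :: "nat \<Rightarrow> nat \<Rightarrow> int" where "beta2 r = simple_root r 2 + simple_root r 3"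
definition delta2 :: "nat \<Rightarrow> nat \<Rightarrow> int" where "delta2 r = simple_root r 1 + simple_root r 2"

text \<open>An element of S^2(g) is represented by a formal sum  sum_k c_k a_k b_k  (a_k, b_k in g),
  encoded as a list of triples (c_k, a_k, b_k).  Such an element is a quadratic polynomial
  function on g^* = g (identification by inv_form), evaluated by s2_eval.
  Since S(g) = C[g^*] faithfully, this represents S^2(g) faithfully up to this evaluation.\<close>

type_synonym s2 = "(complex \<times> complex mat \<times> complex mat) list"

definition s2_eval :: "s2 \<Rightarrow> complex mat \<Rightarrow> complex" where
  "s2_eval L x = (\<Sum>(c, a, b)\<leftarrow>L. c * inv_form a x * inv_form b x)"

definition s2_act :: "complex mat \<Rightarrow> s2 \<Rightarrow> s2" where
  "s2_act \<xi> L = concat (map (\<lambda>(c, a, b). [(c, lie_bracket \<xi> a, b), (c, a, lie_bracket \<xi> b)]) L)"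

definition s2_smult :: "complex \<Rightarrow> s2 \<Rightarrow> s2" where
  "s2_smult k L = map (\<lambda>(c, a, b). (k * c, a, b)) L"

definition w2 :: "nat \<Rightarrow> s2" where
  "w2 r = [(1, root_vec r (theta r), root_vec r (theta2 r)),
           (-1, root_vec r (beta1 r + theta2 r), root_vec r (delta1 r + theta2 r)),
           (-1, root_vec r (beta2 r + theta2 r), root_vec r (delta2 r + theta2 r))]"

inductive_set W2 :: "nat \<Rightarrow> s2 set" for r where
  gen: "w2 r \<in> W2 r"
| zero: "[] \<in> W2 r"
| add: "L \<in> W2 r \<Longrightarrow> M \<in> W2 r \<Longrightarrow> L @ M \<in> W2 r"
| smult: "L \<in> W2 r \<Longrightarrow> s2_smult k L \<in> W2 r"
| act: "L \<in> W2 r \<Longrightarrow> \<xi> \<in> so_alg r \<Longrightarrow> s2_act \<xi> L \<in> W2 r"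

text \<open>Zero locus in g^* = g of the ideal of S(g) generated by W_2.  The zero set of an ideal
  generated by a set of polynomials is the common zero set of the generators.\<close>
definition zero_locus_W2 :: "nat \<Rightarrow> complex mat set" where
  "zero_locus_W2 r = {x \<in> so_alg r. \<forall>L \<in> W2 r. s2_eval L x = 0}"

definition nilcone :: "nat \<Rightarrow> complex mat set" where
  "nilcone r = {x \<in> so_alg r. \<exists>k. x ^\<^sub>m k = 0\<^sub>m (nat_dim r) (nat_dim r)}"

definition orbit_3_1 :: "nat \<Rightarrow> complex mat set" where
  "orbit_3_1 r = {x \<in> so_alg r. jordan_nf x ((3, 0) # replicate (2 * r - 2) (1, 0))}"

definition mat_closure :: "nat \<Rightarrow> complex mat set \<Rightarrow> complex mat set" where
  "mat_closure n S = {x \<in> carrier_mat n n. \<forall>\<epsilon>>0. \<exists>y\<in>S.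
       \<forall>i<n. \<forall>j<n. cmod (x $$ (i, j) - y $$ (i, j)) < \<epsilon>}"

end

theory Submission
  imports Defs
begin

text \<open>
  For x in so(2r+1) the matrix J x is antisymmetric. Evaluated at x, the element w_2 is a nonzero
  multiple of one 4 x 4 Pfaffian of J x, on the indices of eps_1, ..., eps_4 (for r = 3: of eps_1,
  eps_2, eps_3 and the zero weight). Bracketing with the elementary matrices E_pq - E_(-q)(-p) of
  so(2r+1) exchanges one index of such a Pfaffian for another, so W_2 contains all 4 x 4 Pfaffians
  of J x. On the zero locus they vanish, hence J x has rank at most two, i.e. J x = P Q^T - Q P^T.
  Then x^3 = c x with c = (P,Q)^2 - (P,P)(Q,Q), so nilpotency gives c = 0. If x^2 is nonzero,
  a chain v, x v, x^2 v completed by kernel vectors is a Jordan basis of type (3, 1^(2r-2)). If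
  x^2 = 0, then P and Q span a totally isotropic plane, and moving Q slightly in a direction that
  pairs nontrivially with Q produces elements of the orbit converging to x; x = 0 is a limit of
  such elements as well.
\<close>

lemma index_mult_mat_sum:
  assumes "M \<in> carrier_mat n n" "N \<in> carrier_mat n n" "i < n" "j < n"
  shows "(M * N) $$ (i,j) = (\<Sum>k<n. M $$ (i,k) * N $$ (k,j))"
proof -
  have "(M * N) $$ (i,j) = row M i \<bullet> col N j" using assms by simp
  also have "\<dots> = (\<Sum>k\<in>{0..<n}. row M i $ k * col N j $ k)" using assms by (simp add: scalar_prod_def)
  also have "\<dots> = (\<Sum>k<n. M $$ (i,k) * N $$ (k,j))" using assms
    by (auto simp: atLeast0LessThan intro!: sum.cong)
  finally show ?thesis .
qed

lemma unit_mat_carrier[simp]: "unit_mat n a b \<in> carrier_mat n n"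
  unfolding unit_mat_def by simp

lemma dim_unit_mat[simp]: "dim_row (unit_mat n a b) = n" "dim_col (unit_mat n a b) = n"
  unfolding unit_mat_def by simp_all

lemma index_unit_mat: "i < n \<Longrightarrow> j < n \<Longrightarrow> unit_mat n a b $$ (i,j) = (if i = a \<and> j = b then 1 else 0)"
  unfolding unit_mat_def by simp

lemma index_unit_mat_mult:
  assumes M: "M \<in> carrier_mat n n" and i: "i < n" and j: "j < n" and b: "b < n"
  shows "(unit_mat n a b * M) $$ (i,j) = (if i = a then M $$ (b,j) else 0)"
proof -
  have "(unit_mat n a b * M) $$ (i,j) = (\<Sum>k<n. unit_mat n a b $$ (i,k) * M $$ (k,j))"
    by (rule index_mult_mat_sum) (simp_all add: M i j)
  also have "\<dots> = (\<Sum>k<n. if k = b then (if i = a then M $$ (b,j) else 0) else 0)"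
    by (rule sum.cong) (auto simp: index_unit_mat i)
  also have "\<dots> = (if i = a then M $$ (b,j) else 0)" using b by simp
  finally show ?thesis .
qed

lemma index_mult_unit_mat:
  assumes M: "M \<in> carrier_mat n n" and i: "i < n" and j: "j < n" and a: "a < n"
  shows "(M * unit_mat n a b) $$ (i,j) = (if j = b then M $$ (i,a) else 0)"
proof -
  have "(M * unit_mat n a b) $$ (i,j) = (\<Sum>k<n. M $$ (i,k) * unit_mat n a b $$ (k,j))"
    by (rule index_mult_mat_sum) (simp_all add: M i j)
  also have "\<dots> = (\<Sum>k<n. if k = a then (if j = b then M $$ (i,a) else 0) else 0)"
    by (rule sum.cong) (auto simp: index_unit_mat j)
  also have "\<dots> = (if j = b then M $$ (i,a) else 0)" using a by simp
  finally show ?thesis .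
qed

lemma index_mult_mat_vec_sum:
  assumes A: "A \<in> carrier_mat n n" and z: "z \<in> carrier_vec n" and k: "k < n"
  shows "(A *\<^sub>v z) $ k = (\<Sum>c<n. A $$ (k,c) * z $ c)"
  using A z k by (auto simp: scalar_prod_def atLeast0LessThan intro!: sum.cong)

lemma index_mult_mat_vec_unit:
  fixes A :: "'a :: comm_semiring_1 mat"
  assumes A: "A \<in> carrier_mat n n" and j: "j < n" and k: "k < n"
  shows "(A *\<^sub>v unit_vec n j) $ k = A $$ (k, j)"
proof -
  have "(A *\<^sub>v unit_vec n j) $ k = (\<Sum>c<n. A $$ (k,c) * unit_vec n j $ c)"
    by (rule index_mult_mat_vec_sum[OF A unit_vec_carrier k])
  also have "\<dots> = (\<Sum>c<n. if c = j then A $$ (k, j) else 0)"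
    by (rule sum.cong) (auto simp: j)
  finally show ?thesis using j by simp
qed

lemma cramer2_homogeneous:
  fixes a b c d X Z :: "'a :: field"
  assumes "a * X + b * Z = 0" "c * X + d * Z = 0" "a * d - b * c \<noteq> 0"
  shows "X = 0 \<and> Z = 0"
proof -
  have "X * (a * d - b * c) = d * (a * X + b * Z) - b * (c * X + d * Z)" by (simp add: algebra_simps)
  then have x: "X = 0" using assms by simp
  have "Z * (a * d - b * c) = a * (c * X + d * Z) - c * (a * X + b * Z)" by (simp add: algebra_simps)
  then have "Z = 0" using assms by simp
  with x show ?thesis by simp
qed

lemma nilpotent_cube_scalar_zero:
  fixes x :: "'a :: idom mat"
  assumes x: "x \<in> carrier_mat n n" and cube: "x * (x * x) = c \<cdot>\<^sub>m x"
    and nil: "x ^\<^sub>m k = 0\<^sub>m n n" and nz: "x \<noteq> 0\<^sub>m n n"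
  shows "c = 0"
proof -
  have pw: "x ^\<^sub>m (2*j+1) = c ^ j \<cdot>\<^sub>m x" for j
  proof (induction j)
    case 0 then show ?case using x by (auto intro!: eq_matI)
  next
    case (Suc j)
    have "x ^\<^sub>m (2 * Suc j + 1) = (x ^\<^sub>m (2*j+1) * x) * x" by simp
    also have "\<dots> = (c ^ j \<cdot>\<^sub>m x * x) * x" using Suc by simp
    also have "\<dots> = c ^ j \<cdot>\<^sub>m (x * (x * x))"
      using x by (simp add: mult_smult_assoc_mat[of x n n x n] mult_smult_assoc_mat[of "x * x" n n x n])
    also have "\<dots> = c ^ Suc j \<cdot>\<^sub>m x" unfolding cube by (auto intro!: eq_matI)
    finally show ?case .
  qed
  have z: "x ^\<^sub>m m = 0\<^sub>m n n" if "m \<ge> k" for m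
    using that
  proof (induction m)
    case 0 then show ?case using nil by simp
  next
    case (Suc m)
    show ?case
    proof (cases "Suc m = k")
      case True then show ?thesis using nil by simp
    next
      case False
      then have "x ^\<^sub>m m = 0\<^sub>m n n" using Suc by simp
      then show ?thesis using x by simp
    qed
  qed
  have "c ^ k \<cdot>\<^sub>m x = 0\<^sub>m n n" using pw[of k] z[of "2*k+1"] by simp
  moreover obtain i j where ij: "i < n" "j < n" "x $$ (i,j) \<noteq> 0"
    using nz x by (metis eq_matI carrier_matD index_zero_mat)
  ultimately have "c ^ k * x $$ (i,j) = 0"
    using x by (metis carrier_matD index_smult_mat(1) index_zero_mat(1))
  then show ?thesis using ij by simp
qed

lemma similar_mat_of_injective_intertwiner:
  fixes A B S :: "'a :: field mat"
  assumes A: "A \<in> carrier_mat n n" and B: "B \<in> carrier_mat n n" and S: "S \<in> carrier_mat n n"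
    and AS: "A * S = S * B"
    and inj: "\<And>z. z \<in> carrier_vec n \<Longrightarrow> S *\<^sub>v z = 0\<^sub>v n \<Longrightarrow> z = 0\<^sub>v n"
  shows "similar_mat A B"
proof -
  have "det S \<noteq> 0"
    using det_0_iff_vec_prod_zero[OF S] inj by blast
  from det_non_zero_imp_unit[OF S this, unfolded Units_def, of "()"]
  obtain T where T: "T \<in> carrier_mat n n" and ST: "S * T = 1\<^sub>m n" and TS: "T * S = 1\<^sub>m n"
    by (auto simp: ring_mat_def)
  have "A = A * (S * T)" using A by (simp add: ST)
  also have "\<dots> = S * B * T" using A S T by (simp add: AS[symmetric])
  finally show ?thesis
    by (intro similar_matI[of A B S T n]) (use A B S T ST TS in auto)
qed

lemma mult_mat_vec_zero_by_pivots:
  fixes S :: "'a :: idom mat"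
  assumes S: "S \<in> carrier_mat n n" and n: "3 \<le> n" and z: "z \<in> carrier_vec n"
    and Sz: "S *\<^sub>v z = 0\<^sub>v n" and z1: "z $ 1 = 0" and z2: "z $ 2 = 0"
    and u: "u < n" "S $$ (u, 0) \<noteq> 0" "\<And>c. 3 \<le> c \<Longrightarrow> c < n \<Longrightarrow> S $$ (u, c) = 0"
    and f: "\<And>c. 3 \<le> c \<Longrightarrow> c < n \<Longrightarrow> f c < n"
    and pivot: "\<And>c c'. 3 \<le> c \<Longrightarrow> c < n \<Longrightarrow> 3 \<le> c' \<Longrightarrow> c' < n \<Longrightarrow>
      S $$ (f c, c') = (if c' = c then 1 else 0)"
  shows "z = 0\<^sub>v n"
proof -
  have row: "(S *\<^sub>v z) $ k = S $$ (k, 0) * z $ 0 + (\<Sum>c\<in>{3..<n}. S $$ (k, c) * z $ c)"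
    if k: "k < n" for k
  proof -
    have "{..<n} = {0, 1, 2} \<union> {3..<n}" using n by auto
    then have "(\<Sum>c<n. S $$ (k, c) * z $ c) =
        S $$ (k, 0) * z $ 0 + S $$ (k, 1) * z $ 1 + S $$ (k, 2) * z $ 2 + (\<Sum>c\<in>{3..<n}. S $$ (k, c) * z $ c)"
      by (simp add: sum.union_disjoint add.assoc)
    then show ?thesis using index_mult_mat_vec_sum[OF S z k] z1 z2 by simp
  qed
  have "S $$ (u, 0) * z $ 0 = 0" using row[OF u(1)] Sz u by simp
  then have z0: "z $ 0 = 0" using u(2) by simp
  have zc: "z $ c = 0" if c: "3 \<le> c" "c < n" for c
  proof -
    have "(\<Sum>c'\<in>{3..<n}. S $$ (f c, c') * z $ c') = (\<Sum>c'\<in>{3..<n}. if c' = c then z $ c else 0)"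
      by (rule sum.cong) (auto simp: pivot[OF c])
    also have "\<dots> = z $ c" using c by simp
    finally have "(\<Sum>c'\<in>{3..<n}. S $$ (f c, c') * z $ c') = z $ c" .
    then show ?thesis using row[OF f[OF c]] Sz f[OF c] z0 by simp
  qed
  show ?thesis
  proof (rule eq_vecI)
    fix c assume "c < dim_vec (0\<^sub>v n :: 'a vec)"
    then have "c < n" by simp
    moreover consider "c = 0" | "c = 1" | "c = 2" | "3 \<le> c" by linarith
    ultimately show "z $ c = 0\<^sub>v n $ c" using z0 z1 z2 zc by cases auto
  qed (use z in simp)
qed

definition indices_except :: "nat \<Rightarrow> nat \<Rightarrow> nat \<Rightarrow> nat \<Rightarrow> nat list" where
  "indices_except n s t u = filter (\<lambda>k. k \<noteq> s \<and> k \<noteq> t \<and> k \<noteq> u) [0..<n]"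

lemma indices_except_props:
  assumes "s < n" "t < n" "u < n" "s \<noteq> t" "s \<noteq> u" "t \<noteq> u"
  shows "length (indices_except n s t u) = n - 3" "distinct (indices_except n s t u)"
    "set (indices_except n s t u) = {0..<n} - {s,t,u}"
proof -
  show d: "distinct (indices_except n s t u)" unfolding indices_except_def by simp
  show st: "set (indices_except n s t u) = {0..<n} - {s,t,u}" unfolding indices_except_def by auto
  have "card ({0..<n} - {s,t,u}) = n - 3"
    using assms by (subst card_Diff_subset) auto
  then show "length (indices_except n s t u) = n - 3" using distinct_card[OF d] st by simp
qed

lemma indices_except_nth:
  assumes "s < n" "t < n" "u < n" "s \<noteq> t" "s \<noteq> u" "t \<noteq> u" and c: "3 \<le> c" "c < n"
  shows "indices_except n s t u ! (c - 3) < n" "indices_except n s t u ! (c - 3) \<noteq> s" "indices_except n s t u ! (c - 3) \<noteq> t"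
    "indices_except n s t u ! (c - 3) \<noteq> u"
proof -
  have "c - 3 < length (indices_except n s t u)" using indices_except_props[OF assms(1-6)] c by simp
  then have "indices_except n s t u ! (c - 3) \<in> set (indices_except n s t u)" by simp
  then show "indices_except n s t u ! (c - 3) < n" "indices_except n s t u ! (c - 3) \<noteq> s" "indices_except n s t u ! (c - 3) \<noteq> t"
    "indices_except n s t u ! (c - 3) \<noteq> u"
    using indices_except_props(3)[OF assms(1-6)] by auto
qed

lemma indices_except_nth_inj:
  assumes "s < n" "t < n" "u < n" "s \<noteq> t" "s \<noteq> u" "t \<noteq> u" and c: "3 \<le> c" "c < n" and c': "3 \<le> c'" "c' < n"
  shows "indices_except n s t u ! (c - 3) = indices_except n s t u ! (c' - 3) \<longleftrightarrow> c = c'"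
proof -
  have "c - 3 < length (indices_except n s t u)" "c' - 3 < length (indices_except n s t u)"
    using indices_except_props[OF assms(1-6)] c c' by auto
  then show ?thesis using nth_eq_iff_index_eq[OF indices_except_props(2)[OF assms(1-6)]] c c' by auto
qed

lemma mat_closure_superset:
  assumes "x \<in> S" "x \<in> carrier_mat n n"
  shows "x \<in> mat_closure n S"
  unfolding mat_closure_def using assms by force

lemma Jform_carrier[simp]: "Jform r \<in> carrier_mat (nat_dim r) (nat_dim r)"
  unfolding Jform_def by simp

lemma dim_Jform[simp]: "dim_row (Jform r) = nat_dim r" "dim_col (Jform r) = nat_dim r"
  unfolding Jform_def by simp_all

lemma index_Jform_mult:
  assumes M: "M \<in> carrier_mat (nat_dim r) (nat_dim r)" and i: "i < nat_dim r" and j: "j < nat_dim r"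
  shows "(Jform r * M) $$ (i,j) = M $$ (2*r - i, j)"
proof -
  let ?n = "nat_dim r"
  have "(Jform r * M) $$ (i,j) = (\<Sum>k<?n. Jform r $$ (i,k) * M $$ (k,j))"
    by (rule index_mult_mat_sum) (simp_all add: M i j)
  also have "\<dots> = (\<Sum>k<?n. if k = 2*r - i then M $$ (2*r-i,j) else 0)"
    by (rule sum.cong) (use i in \<open>auto simp: Jform_def nat_dim_def\<close>)
  also have "\<dots> = M $$ (2*r - i, j)" using i by (simp add: nat_dim_def)
  finally show ?thesis .
qed

lemma index_mult_Jform:
  assumes M: "M \<in> carrier_mat (nat_dim r) (nat_dim r)" and i: "i < nat_dim r" and j: "j < nat_dim r"
  shows "(M * Jform r) $$ (i,j) = M $$ (i, 2*r - j)"
proof -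
  let ?n = "nat_dim r"
  have "(M * Jform r) $$ (i,j) = (\<Sum>k<?n. M $$ (i,k) * Jform r $$ (k,j))"
    by (rule index_mult_mat_sum) (simp_all add: M i j)
  also have "\<dots> = (\<Sum>k<?n. if k = 2*r - j then M $$ (i, 2*r-j) else 0)"
    by (rule sum.cong) (use j in \<open>auto simp: Jform_def nat_dim_def\<close>)
  also have "\<dots> = M $$ (i, 2*r - j)" using j by (simp add: nat_dim_def)
  finally show ?thesis .
qed

(* The entries of J x. *)
definition form_entry :: "nat \<Rightarrow> complex mat \<Rightarrow> nat \<Rightarrow> nat \<Rightarrow> complex" where
  "form_entry r x a b = x $$ (2*r - a, b)"

lemma so_alg_iff_form_entry:
  "x \<in> so_alg r \<longleftrightarrow> x \<in> carrier_mat (nat_dim r) (nat_dim r) \<and>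
     (\<forall>a < nat_dim r. \<forall>b < nat_dim r. form_entry r x a b = - form_entry r x b a)"
proof (cases "x \<in> carrier_mat (nat_dim r) (nat_dim r)")
  case False
  then show ?thesis unfolding so_alg_def by simp
next
  case x: True
  let ?n = "nat_dim r"
  have c1: "transpose_mat x * Jform r \<in> carrier_mat ?n ?n" using x by simp
  have c2: "- (Jform r * x) \<in> carrier_mat ?n ?n" using x by (simp add: mult_carrier_mat[OF Jform_carrier])
  have e1: "(transpose_mat x * Jform r) $$ (a,b) = form_entry r x b a" if a: "a < ?n" and b: "b < ?n" for a b
  proof -
    have "(transpose_mat x * Jform r) $$ (a,b) = transpose_mat x $$ (a, 2*r-b)"
      by (rule index_mult_Jform) (use x a b in auto)
    also have "\<dots> = x $$ (2*r-b, a)" using x a b by (simp add: nat_dim_def)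
    finally show ?thesis by (simp add: form_entry_def)
  qed
  have e2: "(- (Jform r * x)) $$ (a,b) = - form_entry r x a b" if a: "a < ?n" and b: "b < ?n" for a b
    using index_Jform_mult[OF x a b] a b x by (simp add: form_entry_def)
  have "transpose_mat x * Jform r = - (Jform r * x) \<longleftrightarrow>
     (\<forall>a < ?n. \<forall>b < ?n. form_entry r x a b = - form_entry r x b a)"
  proof
    assume h: "transpose_mat x * Jform r = - (Jform r * x)"
    show "\<forall>a < ?n. \<forall>b < ?n. form_entry r x a b = - form_entry r x b a"
    proof (intro allI impI)
      fix a b assume a: "a < ?n" and b: "b < ?n"
      have "(transpose_mat x * Jform r) $$ (b,a) = (- (Jform r * x)) $$ (b,a)" using h by simp
      then show "form_entry r x a b = - form_entry r x b a" using e1[OF b a] e2[OF b a] by simp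
    qed
  next
    assume h: "\<forall>a < ?n. \<forall>b < ?n. form_entry r x a b = - form_entry r x b a"
    show "transpose_mat x * Jform r = - (Jform r * x)"
    proof (rule eq_matI)
      fix a b assume "a < dim_row (- (Jform r * x))" and "b < dim_col (- (Jform r * x))"
      then have a: "a < ?n" and b: "b < ?n" using c2 by auto
      show "(transpose_mat x * Jform r) $$ (a,b) = (- (Jform r * x)) $$ (a,b)"
        unfolding e1[OF a b] e2[OF a b] using h[rule_format, OF b a] by simp
    qed (use c1 c2 in auto)
  qed
  then show ?thesis unfolding so_alg_def using x by simp
qed

lemma mat_trace_mult_comm:
  assumes "M \<in> carrier_mat n n" "N \<in> carrier_mat n n"
  shows "mat_trace (M * N) = mat_trace (N * M)"
proof -
  have "mat_trace (M * N) = (\<Sum>i<n. (M * N) $$ (i,i))" unfolding mat_trace_def using assms by simp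
  also have "\<dots> = (\<Sum>i<n. \<Sum>k<n. M $$ (i,k) * N $$ (k,i))"
    by (rule sum.cong[OF refl], rule index_mult_mat_sum) (use assms in auto)
  also have "\<dots> = (\<Sum>k<n. \<Sum>i<n. N $$ (k,i) * M $$ (i,k))"
    by (subst sum.swap) (simp add: mult.commute)
  also have "\<dots> = (\<Sum>i<n. (N * M) $$ (i,i))"
    by (rule sum.cong[OF refl], rule index_mult_mat_sum[symmetric]) (use assms in auto)
  also have "\<dots> = mat_trace (N * M)" unfolding mat_trace_def using assms by simp
  finally show ?thesis .
qed

lemma mat_trace_add: assumes "M \<in> carrier_mat n n" "N \<in> carrier_mat n n"
  shows "mat_trace (M + N) = mat_trace M + mat_trace N"
  using assms unfolding mat_trace_def by (simp add: sum.distrib)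

lemma mat_trace_diff: assumes "M \<in> carrier_mat n n" "N \<in> carrier_mat n n"
  shows "mat_trace (M - N) = mat_trace M - mat_trace N"
  using assms unfolding mat_trace_def by (simp add: sum_subtractf)

lemma inv_form_add:
  assumes "a \<in> carrier_mat n n" "x \<in> carrier_mat n n" "y \<in> carrier_mat n n"
  shows "inv_form a (x + y) = inv_form a x + inv_form a y"
proof -
  have "a * (x + y) = a * x + a * y" using assms by (simp add: mult_add_distrib_mat)
  then show ?thesis unfolding inv_form_def using assms
    by (simp add: mat_trace_add[of _ n] add_divide_distrib)
qed

lemma lie_bracket_carrier[simp]:
  "x \<in> carrier_mat n n \<Longrightarrow> y \<in> carrier_mat n n \<Longrightarrow> lie_bracket x y \<in> carrier_mat n n"
  unfolding lie_bracket_def by (simp add: minus_carrier_mat)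

lemma inv_form_lie_bracket:
  assumes a: "a \<in> carrier_mat n n" and x: "x \<in> carrier_mat n n" and xi: "\<xi> \<in> carrier_mat n n"
  shows "inv_form (lie_bracket \<xi> a) x = inv_form a (lie_bracket x \<xi>)"
proof -
  have "lie_bracket \<xi> a * x = \<xi> * (a * x) - a * (\<xi> * x)"
    unfolding lie_bracket_def using assms
    by (simp add: minus_mult_distrib_mat[OF mult_carrier_mat[OF xi a] mult_carrier_mat[OF a xi] x])
  hence 1: "mat_trace (lie_bracket \<xi> a * x) = mat_trace ((a * x) * \<xi>) - mat_trace (a * (\<xi> * x))"
    using assms by (simp add: mat_trace_diff[of _ n] mat_trace_mult_comm[of \<xi> n "a*x"])
  have "a * lie_bracket x \<xi> = (a * x) * \<xi> - a * (\<xi> * x)"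
    unfolding lie_bracket_def using assms
    by (simp add: mult_minus_distrib_mat[OF a mult_carrier_mat[OF x xi] mult_carrier_mat[OF xi x]])
  hence 2: "mat_trace (a * lie_bracket x \<xi>) = mat_trace ((a * x) * \<xi>) - mat_trace (a * (\<xi> * x))"
    using assms by (simp add: mat_trace_diff[of _ n])
  show ?thesis unfolding inv_form_def using 1 2 by simp
qed

lemma inv_form_unit_mat:
  assumes x: "x \<in> carrier_mat n n" and a: "a < n" and b: "b < n"
  shows "inv_form (unit_mat n a b) x = x $$ (b, a) / 2"
proof -
  have "mat_trace (unit_mat n a b * x) = (\<Sum>i<n. (unit_mat n a b * x) $$ (i,i))"
    unfolding mat_trace_def by simp
  also have "\<dots> = (\<Sum>i<n. if i = a then x $$ (b,i) else 0)"
    by (rule sum.cong[OF refl]) (simp add: index_unit_mat_mult[OF x _ _ b])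
  also have "\<dots> = x $$ (b,a)" using a by simp
  finally show ?thesis unfolding inv_form_def by simp
qed

lemma inv_form_diff:
  assumes x: "x \<in> carrier_mat n n" and U: "U \<in> carrier_mat n n" and V: "V \<in> carrier_mat n n"
  shows "inv_form (U - V) x = inv_form U x - inv_form V x"
proof -
  have "(U - V) * x = U * x - V * x" by (rule minus_mult_distrib_mat[OF U V x])
  then show ?thesis unfolding inv_form_def
    using mat_trace_diff[of "U * x" n "V * x"] U V x by (simp add: field_simps)
qed

lemma inv_form_smult_diff:
  assumes x: "x \<in> carrier_mat n n" and U: "U \<in> carrier_mat n n" and V: "V \<in> carrier_mat n n"
  shows "inv_form (c \<cdot>\<^sub>m (U - V)) x = c * (inv_form U x - inv_form V x)"
proof -
  have UV: "U - V \<in> carrier_mat n n" using V by (simp add: minus_carrier_mat)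
  have M: "(U - V) * x \<in> carrier_mat n n" using UV x by simp
  have "(c \<cdot>\<^sub>m (U - V)) * x = c \<cdot>\<^sub>m ((U - V) * x)"
    using mult_smult_assoc_mat[OF UV x] by simp
  moreover have "mat_trace (c \<cdot>\<^sub>m ((U - V) * x)) = c * mat_trace ((U - V) * x)"
    using M V unfolding mat_trace_def by (auto simp: sum_distrib_left intro!: sum.cong)
  ultimately have "inv_form (c \<cdot>\<^sub>m (U - V)) x = c * inv_form (U - V) x"
    unfolding inv_form_def by simp
  then show ?thesis using inv_form_diff[OF x U V] by simp
qed

definition s2_carrier :: "nat \<Rightarrow> s2 \<Rightarrow> bool" where
  "s2_carrier n L = (\<forall>(c,a,b) \<in> set L. a \<in> carrier_mat n n \<and> b \<in> carrier_mat n n)"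

lemma s2_eval_act:
  assumes L: "s2_carrier n L" and x: "x \<in> carrier_mat n n" and xi: "\<xi> \<in> carrier_mat n n"
  shows "s2_eval (s2_act \<xi> L) x = s2_eval L (x + lie_bracket x \<xi>) - s2_eval L x - s2_eval L (lie_bracket x \<xi>)"
  using L
proof (induction L)
  case Nil
  then show ?case by (simp add: s2_eval_def s2_act_def)
next
  case (Cons t L)
  obtain c a b where t: "t = (c,a,b)" by (cases t) auto
  from Cons.prems have ab: "a \<in> carrier_mat n n" "b \<in> carrier_mat n n" and L': "s2_carrier n L"
    unfolding s2_carrier_def t by auto
  note IH = Cons.IH[OF L']
  let ?y = "lie_bracket x \<xi>"
  have y: "?y \<in> carrier_mat n n" using x xi by simp
  have e1: "inv_form (lie_bracket \<xi> a) x = inv_form a ?y" by (rule inv_form_lie_bracket[OF ab(1) x xi])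
  have e2: "inv_form (lie_bracket \<xi> b) x = inv_form b ?y" by (rule inv_form_lie_bracket[OF ab(2) x xi])
  have s1: "s2_eval (s2_act \<xi> (t # L)) x = c * inv_form a ?y * inv_form b x + c * inv_form a x * inv_form b ?y
       + s2_eval (s2_act \<xi> L) x"
    unfolding t s2_act_def s2_eval_def using e1 e2 by simp
  have s2: "\<And>z. s2_eval (t # L) z = c * inv_form a z * inv_form b z + s2_eval L z"
    unfolding t s2_eval_def by simp
  show ?case unfolding s1 s2 IH
    using inv_form_add[OF ab(1) x y] inv_form_add[OF ab(2) x y]
    by (simp add: algebra_simps)
qed

lemma root_vec_carrier[simp]: "root_vec r \<alpha> \<in> carrier_mat (nat_dim r) (nat_dim r)"
  unfolding root_vec_def e_minus_def e_plus_def e_short_def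
  by (auto split: prod.split simp: minus_carrier_mat)

lemma W2_s2_carrier: "L \<in> W2 r \<Longrightarrow> s2_carrier (nat_dim r) L"
proof (induction rule: W2.induct)
  case gen
  then show ?case unfolding w2_def s2_carrier_def by simp
next
  case zero
  then show ?case by (simp add: s2_carrier_def)
next
  case (add L M)
  then show ?case by (auto simp: s2_carrier_def)
next
  case (smult L k)
  then show ?case by (auto simp: s2_carrier_def s2_smult_def)
next
  case (act L \<xi>)
  have xi: "\<xi> \<in> carrier_mat (nat_dim r) (nat_dim r)" using act.hyps(2) by (simp add: so_alg_def)
  show ?case using act.IH xi unfolding s2_carrier_def s2_act_def by fastforce
qed

lemma s2_eval_smult: "s2_eval (s2_smult k L) x = k * s2_eval L x"
  unfolding s2_eval_def s2_smult_def
  by (induction L) (auto simp: algebra_simps)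

section \<open>Pluecker relations in W_2\<close>

(* Equal to form_entry on so(2r+1), but linear in x on all matrices. *)
definition alt_entry :: "nat \<Rightarrow> complex mat \<Rightarrow> nat \<Rightarrow> nat \<Rightarrow> complex" where
  "alt_entry r x a b = (form_entry r x a b - form_entry r x b a) / 2"

definition plucker :: "nat \<Rightarrow> complex mat \<Rightarrow> nat \<Rightarrow> nat \<Rightarrow> nat \<Rightarrow> nat \<Rightarrow> complex" where
  "plucker r x i j k l = alt_entry r x i j * alt_entry r x k l - alt_entry r x i k * alt_entry r x j l + alt_entry r x i l * alt_entry r x j k"

definition so_gen :: "nat \<Rightarrow> nat \<Rightarrow> nat \<Rightarrow> complex mat" where
  "so_gen r p q = unit_mat (nat_dim r) p q - unit_mat (nat_dim r) (2*r - q) (2*r - p)"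

lemma so_gen_carrier[simp]: "so_gen r p q \<in> carrier_mat (nat_dim r) (nat_dim r)"
  unfolding so_gen_def by (simp add: minus_carrier_mat)

lemma form_entry_so_gen:
  assumes p: "p < nat_dim r" and q: "q < nat_dim r" and a: "a < nat_dim r" and b: "b < nat_dim r"
  shows "form_entry r (so_gen r p q) a b = (if a = 2*r - p \<and> b = q then 1 else 0) - (if a = q \<and> b = 2*r - p then 1 else 0)"
proof -
  have a': "2*r - a < nat_dim r" by (simp add: nat_dim_def)
  have "form_entry r (so_gen r p q) a b = (if 2*r-a = p \<and> b = q then 1 else 0) - (if 2*r-a = 2*r-q \<and> b = 2*r-p then 1 else 0)"
    unfolding form_entry_def so_gen_def using a' b by (simp add: index_unit_mat)
  moreover have "2*r - a = p \<longleftrightarrow> a = 2*r - p" using a p unfolding nat_dim_def by linarith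
  moreover have "2*r - a = 2*r - q \<longleftrightarrow> a = q" using a q unfolding nat_dim_def by linarith
  ultimately show ?thesis by simp
qed

lemma so_gen_in_so_alg:
  assumes p: "p < nat_dim r" and q: "q < nat_dim r"
  shows "so_gen r p q \<in> so_alg r"
  unfolding so_alg_iff_form_entry
proof (intro conjI allI impI)
  fix a b assume a: "a < nat_dim r" and b: "b < nat_dim r"
  show "form_entry r (so_gen r p q) a b = - form_entry r (so_gen r p q) b a"
    unfolding form_entry_so_gen[OF p q a b] form_entry_so_gen[OF p q b a] conj_commute[of "b = _"] by simp
qed simp

lemma form_entry_bracket_so_gen:
  assumes x: "x \<in> carrier_mat (nat_dim r) (nat_dim r)" and p: "p < nat_dim r" and q: "q < nat_dim r"
    and a: "a < nat_dim r" and b: "b < nat_dim r"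
  shows "form_entry r (lie_bracket x (so_gen r p q)) a b =
     (if b = q then form_entry r x a p else 0) - (if b = 2*r-p then form_entry r x a (2*r-q) else 0)
   - (if a = 2*r-p then form_entry r x (2*r-q) b else 0) + (if a = q then form_entry r x p b else 0)"
proof -
  let ?n = "nat_dim r"
  let ?U1 = "unit_mat ?n p q" and ?U2 = "unit_mat ?n (2*r - q) (2*r - p)"
  have a': "2*r - a < ?n" using a by (auto simp: nat_dim_def)
  have p': "2*r - p < ?n" and q': "2*r - q < ?n" by (auto simp: nat_dim_def)
  have U1: "?U1 \<in> carrier_mat ?n ?n" and U2: "?U2 \<in> carrier_mat ?n ?n" by auto
  have e1: "x * so_gen r p q = x * ?U1 - x * ?U2"
    unfolding so_gen_def by (rule mult_minus_distrib_mat[OF x U1 U2])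
  have e2: "so_gen r p q * x = ?U1 * x - ?U2 * x"
    unfolding so_gen_def by (rule minus_mult_distrib_mat[OF U1 U2 x])
  have "lie_bracket x (so_gen r p q) $$ (2*r - a, b)
     = (x * ?U1) $$ (2*r-a, b) - (x * ?U2) $$ (2*r-a, b) - ((?U1 * x) $$ (2*r-a, b) - (?U2 * x) $$ (2*r-a,b))"
    unfolding lie_bracket_def e1 e2 using a' b x by simp
  also have "\<dots> = (if b = q then x $$ (2*r-a, p) else 0) - (if b = 2*r-p then x $$ (2*r-a, 2*r-q) else 0)
      - ((if 2*r - a = p then x $$ (q, b) else 0) - (if 2*r-a = 2*r-q then x $$ (2*r-p, b) else 0))"
    using index_mult_unit_mat[OF x a' b p] index_mult_unit_mat[OF x a' b q']
      index_unit_mat_mult[OF x a' b q] index_unit_mat_mult[OF x a' b p'] by simp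
  also have "\<dots> = (if b = q then form_entry r x a p else 0) - (if b = 2*r-p then form_entry r x a (2*r-q) else 0)
   - (if a = 2*r-p then form_entry r x (2*r-q) b else 0) + (if a = q then form_entry r x p b else 0)"
    unfolding form_entry_def using a p q by (auto simp: nat_dim_def)
  finally show ?thesis unfolding form_entry_def .
qed

lemma alt_entry_bracket_so_gen:
  assumes x: "x \<in> carrier_mat (nat_dim r) (nat_dim r)" and p: "p < nat_dim r" and q: "q < nat_dim r"
    and a: "a < nat_dim r" and b: "b < nat_dim r"
  shows "alt_entry r (lie_bracket x (so_gen r p q)) a b =
     (if b = q then alt_entry r x a p else 0) - (if b = 2*r-p then alt_entry r x a (2*r-q) else 0)
   - (if a = 2*r-p then alt_entry r x (2*r-q) b else 0) + (if a = q then alt_entry r x p b else 0)"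
  unfolding alt_entry_def form_entry_bracket_so_gen[OF x p q a b] form_entry_bracket_so_gen[OF x p q b a]
  by (cases "b = q"; cases "b = 2*r-p"; cases "a = 2*r-p"; cases "a = q") (simp_all add: field_simps)

lemma alt_entry_add:
  assumes "x \<in> carrier_mat (nat_dim r) (nat_dim r)" "y \<in> carrier_mat (nat_dim r) (nat_dim r)"
    "a < nat_dim r" "b < nat_dim r"
  shows "alt_entry r (x + y) a b = alt_entry r x a b + alt_entry r y a b"
proof -
  have "2*r - a < nat_dim r" "2*r - b < nat_dim r" by (auto simp: nat_dim_def)
  then show ?thesis using assms unfolding alt_entry_def form_entry_def by (simp add: field_simps)
qed

definition W2_realizes :: "nat \<Rightarrow> (complex mat \<Rightarrow> complex) \<Rightarrow> bool" where
  "W2_realizes r f = (\<exists>L \<in> W2 r. \<forall>x \<in> carrier_mat (nat_dim r) (nat_dim r). s2_eval L x = f x)"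

lemma W2_realizes_act:
  assumes g: "W2_realizes r f" and xi: "\<xi> \<in> so_alg r"
  shows "W2_realizes r (\<lambda>x. f (x + lie_bracket x \<xi>) - f x - f (lie_bracket x \<xi>))"
proof -
  obtain L where L: "L \<in> W2 r" and e: "\<forall>x \<in> carrier_mat (nat_dim r) (nat_dim r). s2_eval L x = f x"
    using g unfolding W2_realizes_def by blast
  have xic: "\<xi> \<in> carrier_mat (nat_dim r) (nat_dim r)" using xi unfolding so_alg_def by simp
  show ?thesis unfolding W2_realizes_def
  proof (intro bexI ballI)
    show "s2_act \<xi> L \<in> W2 r" using L xi by (rule W2.act)
    fix x :: "complex mat" assume x: "x \<in> carrier_mat (nat_dim r) (nat_dim r)"
    have y: "lie_bracket x \<xi> \<in> carrier_mat (nat_dim r) (nat_dim r)" using x xic by simp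
    show "s2_eval (s2_act \<xi> L) x = f (x + lie_bracket x \<xi>) - f x - f (lie_bracket x \<xi>)"
      unfolding s2_eval_act[OF W2_s2_carrier[OF L] x xic] using e x y by simp
  qed
qed

lemma W2_realizes_smult: "W2_realizes r f \<Longrightarrow> W2_realizes r (\<lambda>x. c * f x)"
  unfolding W2_realizes_def by (metis W2.smult s2_eval_smult)

lemma W2_realizes_cong: "W2_realizes r f \<Longrightarrow> (\<And>x. x \<in> carrier_mat (nat_dim r) (nat_dim r) \<Longrightarrow> f x = g x) \<Longrightarrow> W2_realizes r g"
  unfolding W2_realizes_def by metis

lemma W2_realizes_zero: "W2_realizes r (\<lambda>x. 0)"
  unfolding W2_realizes_def by (rule bexI[OF _ W2.zero]) (simp add: s2_eval_def)

definition plucker_in_W2 :: "nat \<Rightarrow> nat \<Rightarrow> nat \<Rightarrow> nat \<Rightarrow> nat \<Rightarrow> bool" where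
  "plucker_in_W2 r i j k l = W2_realizes r (\<lambda>x. plucker r x i j k l)"

lemma W2_realizes_uminus: "W2_realizes r (\<lambda>x. - f x) \<Longrightarrow> W2_realizes r f"
  using W2_realizes_smult[of r "\<lambda>x. - f x" "-1"] by simp

lemma plucker_in_W2_swap12: "plucker_in_W2 r i j k l \<Longrightarrow> plucker_in_W2 r j i k l"
  unfolding plucker_in_W2_def by (rule W2_realizes_uminus, rule W2_realizes_cong, assumption) (simp add: plucker_def alt_entry_def field_simps)

lemma plucker_in_W2_swap23: "plucker_in_W2 r i j k l \<Longrightarrow> plucker_in_W2 r i k j l"
  unfolding plucker_in_W2_def by (rule W2_realizes_uminus, rule W2_realizes_cong, assumption) (simp add: plucker_def alt_entry_def field_simps)

lemma plucker_in_W2_swap34: "plucker_in_W2 r i j k l \<Longrightarrow> plucker_in_W2 r i j l k"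
  unfolding plucker_in_W2_def by (rule W2_realizes_uminus, rule W2_realizes_cong, assumption) (simp add: plucker_def alt_entry_def field_simps)

definition plucker_polar :: "nat \<Rightarrow> complex mat \<Rightarrow> complex mat \<Rightarrow> nat \<Rightarrow> nat \<Rightarrow> nat \<Rightarrow> nat \<Rightarrow> complex" where
  "plucker_polar r x y i j k l =
     alt_entry r x i j * alt_entry r y k l + alt_entry r y i j * alt_entry r x k l
   - (alt_entry r x i k * alt_entry r y j l + alt_entry r y i k * alt_entry r x j l)
   + (alt_entry r x i l * alt_entry r y j k + alt_entry r y i l * alt_entry r x j k)"

lemma plucker_add:
  assumes x: "x \<in> carrier_mat (nat_dim r) (nat_dim r)" and y: "y \<in> carrier_mat (nat_dim r) (nat_dim r)"
   and i: "i < nat_dim r" and j: "j < nat_dim r" and k: "k < nat_dim r" and l: "l < nat_dim r"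
  shows "plucker r (x + y) i j k l = plucker r x i j k l + plucker r y i j k l + plucker_polar r x y i j k l"
  unfolding plucker_def plucker_polar_def using alt_entry_add[OF x y] i j k l by (simp add: algebra_simps)

lemma plucker_in_W2_act:
  assumes g: "plucker_in_W2 r i j k l" and p: "p < nat_dim r" and q: "q < nat_dim r"
    and i: "i < nat_dim r" and j: "j < nat_dim r" and k: "k < nat_dim r" and l: "l < nat_dim r"
  shows "W2_realizes r (\<lambda>x. plucker_polar r x (lie_bracket x (so_gen r p q)) i j k l)"
  using W2_realizes_act[OF g[unfolded plucker_in_W2_def] so_gen_in_so_alg[OF p q]]
proof (rule W2_realizes_cong)
  fix x :: "complex mat" assume x: "x \<in> carrier_mat (nat_dim r) (nat_dim r)"
  then have "lie_bracket x (so_gen r p q) \<in> carrier_mat (nat_dim r) (nat_dim r)" by simp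
  with x show "plucker r (x + lie_bracket x (so_gen r p q)) i j k l - plucker r x i j k l
      - plucker r (lie_bracket x (so_gen r p q)) i j k l = plucker_polar r x (lie_bracket x (so_gen r p q)) i j k l"
    using plucker_add i j k l by simp
qed

(* The bracket with so_gen r r q (resp. so_gen r p r) exchanges the index q for the middle,
   zero-weight index r (resp. r for p); the other indices are untouched. *)
lemma plucker_in_W2_move_to_mid:
  assumes g: "plucker_in_W2 r i j k q" and q: "q < nat_dim r"
    and i: "i < nat_dim r" and j: "j < nat_dim r" and k: "k < nat_dim r"
    and qr: "q \<noteq> r" and iq: "i \<noteq> q" "j \<noteq> q" "k \<noteq> q" and ir: "i \<noteq> r" "j \<noteq> r" "k \<noteq> r"
  shows "plucker_in_W2 r i j k r"
proof -
  have rn: "r < nat_dim r" by (simp add: nat_dim_def)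
  have rr: "2 * r - r = r" by simp
  show ?thesis unfolding plucker_in_W2_def
    using plucker_in_W2_act[OF g rn q i j k q]
  proof (rule W2_realizes_cong)
    fix x :: "complex mat" assume x: "x \<in> carrier_mat (nat_dim r) (nat_dim r)"
    note sb = alt_entry_bracket_so_gen[OF x rn q]
    show "plucker_polar r x (lie_bracket x (so_gen r r q)) i j k q = plucker r x i j k r"
      unfolding plucker_polar_def sb[OF k q] sb[OF i j] sb[OF j q] sb[OF i k] sb[OF j k] sb[OF i q] rr plucker_def
      using qr iq ir by simp
  qed
qed

lemma plucker_in_W2_move_from_mid:
  assumes g: "plucker_in_W2 r i j k r" and p: "p < nat_dim r"
    and i: "i < nat_dim r" and j: "j < nat_dim r" and k: "k < nat_dim r"
    and pr: "p \<noteq> r" and ir: "i \<noteq> r" "j \<noteq> r" "k \<noteq> r"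
  shows "plucker_in_W2 r i j k p"
proof -
  have rn: "r < nat_dim r" by (simp add: nat_dim_def)
  have rr: "2 * r - r = r" by simp
  have pb: "2 * r - p \<noteq> r" using pr p by (auto simp: nat_dim_def)
  show ?thesis unfolding plucker_in_W2_def
    using plucker_in_W2_act[OF g p rn i j k rn]
  proof (rule W2_realizes_cong)
    fix x :: "complex mat" assume x: "x \<in> carrier_mat (nat_dim r) (nat_dim r)"
    note sb = alt_entry_bracket_so_gen[OF x p rn]
    show "plucker_polar r x (lie_bracket x (so_gen r p r)) i j k r = plucker r x i j k p"
      unfolding plucker_polar_def sb[OF k rn] sb[OF i j] sb[OF j rn] sb[OF i k] sb[OF j k] sb[OF i rn] rr plucker_def
      using pr ir pb
      by (cases "i = 2*r - p"; cases "j = 2*r - p"; cases "k = 2*r - p") (simp_all add: alt_entry_def field_simps)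
  qed
qed

lemma plucker_in_W2_not_distinct:
  assumes "\<not> distinct [i,j,k,l]"
  shows "plucker_in_W2 r i j k l"
proof -
  have "plucker r x i j k l = 0" for x
    using assms unfolding plucker_def alt_entry_def by (auto simp: field_simps)
  then show ?thesis unfolding plucker_in_W2_def by (intro W2_realizes_cong[OF W2_realizes_zero]) simp
qed

lemma plucker_in_W2_replace_last:
  assumes g: "plucker_in_W2 r i j k l" and n: "i < nat_dim r" "j < nat_dim r" "k < nat_dim r" "l < nat_dim r" "p < nat_dim r"
    and ir: "i \<noteq> r" "j \<noteq> r" "k \<noteq> r" and l: "l \<noteq> i" "l \<noteq> j" "l \<noteq> k"
  shows "plucker_in_W2 r i j k p"
proof -
  have gr: "plucker_in_W2 r i j k r"
  proof (cases "l = r")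
    case True then show ?thesis using g by simp
  next
    case False
    show ?thesis by (rule plucker_in_W2_move_to_mid[OF g n(4) n(1-3) False]) (use l ir in auto)
  qed
  show ?thesis
  proof (cases "p = r")
    case True then show ?thesis using gr by simp
  next
    case False then show ?thesis using plucker_in_W2_move_from_mid[OF gr n(5) n(1-3) False ir] by simp
  qed
qed

lemma plucker_in_W2_replace_fst:
  assumes g: "plucker_in_W2 r i j k r" and n: "i < nat_dim r" "j < nat_dim r" "k < nat_dim r" "p < nat_dim r"
    and ir: "i \<noteq> r" "j \<noteq> r" "k \<noteq> r" and d: "i \<noteq> j" "i \<noteq> k" and pr: "p \<noteq> j" "p \<noteq> k" "p \<noteq> r"
  shows "plucker_in_W2 r p j k r"
proof (cases "p = i")
  case True then show ?thesis using g by simp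
next
  case False
  have rn: "r < nat_dim r" by (simp add: nat_dim_def)
  have "plucker_in_W2 r i j k p" by (rule plucker_in_W2_replace_last[OF g n(1-3) rn n(4) ir]) (use ir in auto)
  then have "plucker_in_W2 r j k p i" by (rule plucker_in_W2_swap34[OF plucker_in_W2_swap23[OF plucker_in_W2_swap12]])
  then have "plucker_in_W2 r j k p r" by (rule plucker_in_W2_replace_last[OF _ n(2,3,4,1) rn]) (use ir pr d False in auto)
  then show ?thesis by (rule plucker_in_W2_swap12[OF plucker_in_W2_swap23])
qed

lemma plucker_in_W2_replace_snd:
  assumes g: "plucker_in_W2 r i j k r" and n: "i < nat_dim r" "j < nat_dim r" "k < nat_dim r" "p < nat_dim r"
    and ir: "i \<noteq> r" "j \<noteq> r" "k \<noteq> r" and d: "i \<noteq> j" "j \<noteq> k" and pr: "p \<noteq> i" "p \<noteq> k" "p \<noteq> r"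
  shows "plucker_in_W2 r i p k r"
proof -
  have "plucker_in_W2 r j i k r" using g by (rule plucker_in_W2_swap12)
  then have "plucker_in_W2 r p i k r" by (rule plucker_in_W2_replace_fst) (use n ir d pr in auto)
  then show ?thesis by (rule plucker_in_W2_swap12)
qed

lemma plucker_in_W2_replace_thd:
  assumes g: "plucker_in_W2 r i j k r" and n: "i < nat_dim r" "j < nat_dim r" "k < nat_dim r" "p < nat_dim r"
    and ir: "i \<noteq> r" "j \<noteq> r" "k \<noteq> r" and d: "i \<noteq> k" "j \<noteq> k" and pr: "p \<noteq> i" "p \<noteq> j" "p \<noteq> r"
  shows "plucker_in_W2 r i j p r"
proof -
  have "plucker_in_W2 r k i j r" using g by (rule plucker_in_W2_swap12[OF plucker_in_W2_swap23])
  then have "plucker_in_W2 r p i j r" by (rule plucker_in_W2_replace_fst) (use n ir d pr in auto)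
  then show ?thesis by (rule plucker_in_W2_swap23[OF plucker_in_W2_swap12])
qed

lemma plucker_in_W2_fix_third:
  assumes r3: "r \<ge> 3" and base: "plucker_in_W2 r 0 1 2 r"
    and ij: "i < nat_dim r" "j < nat_dim r" "i \<noteq> j" "i \<noteq> 2" "j \<noteq> 2" "i \<noteq> r" "j \<noteq> r"
  shows "plucker_in_W2 r i j 2 r"
proof -
  have n0: "0 < nat_dim r" and n1: "1 < nat_dim r" and n2: "2 < nat_dim r"
    using r3 by (auto simp: nat_dim_def)
  have first_moved: "plucker_in_W2 r i 1 2 r" if "i < nat_dim r" "i \<noteq> 1" "i \<noteq> 2" "i \<noteq> r" for i
    by (rule plucker_in_W2_replace_fst[OF base n0 n1 n2 that(1)]) (use that r3 in auto)
  consider "j = 1" | "i = 1" | "i \<noteq> 1" "j \<noteq> 1" by blast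
  then show ?thesis
  proof cases
    case 1 then show ?thesis using first_moved[of i] ij by auto
  next
    case 2 then show ?thesis using plucker_in_W2_swap12[OF first_moved[of j]] ij by auto
  next
    case 3
    have "plucker_in_W2 r i 1 2 r" using first_moved[of i] ij 3 by auto
    then show ?thesis by (rule plucker_in_W2_replace_snd) (use ij 3 n1 n2 r3 in auto)
  qed
qed

lemma plucker_in_W2_off_mid:
  assumes r3: "r \<ge> 3" and base: "plucker_in_W2 r 0 1 2 r"
    and ijk: "i < nat_dim r" "j < nat_dim r" "k < nat_dim r" "i \<noteq> j" "i \<noteq> k" "j \<noteq> k"
    and mid: "i \<noteq> r" "j \<noteq> r" "k \<noteq> r"
  shows "plucker_in_W2 r i j k r"
proof -
  have n2: "2 < nat_dim r" using r3 by (simp add: nat_dim_def)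
  note third_fixed = plucker_in_W2_fix_third[OF r3 base]
  consider "k = 2" | "i = 2" | "j = 2" | "i \<noteq> 2" "j \<noteq> 2" "k \<noteq> 2" by blast
  then show ?thesis
  proof cases
    case 1 then show ?thesis using third_fixed[of i j] ijk mid by auto
  next
    case 2
    have "plucker_in_W2 r k j 2 r" using third_fixed[of k j] ijk mid 2 by auto
    then have "plucker_in_W2 r k 2 j r" by (rule plucker_in_W2_swap23)
    then have "plucker_in_W2 r 2 k j r" by (rule plucker_in_W2_swap12)
    from plucker_in_W2_swap23[OF this] show ?thesis using 2 by simp
  next
    case 3
    have "plucker_in_W2 r i k 2 r" using third_fixed[of i k] ijk mid 3 by auto
    from plucker_in_W2_swap23[OF this] show ?thesis using 3 by simp
  next
    case 4
    have "plucker_in_W2 r i j 2 r" using third_fixed[of i j] ijk mid 4 by auto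
    then show ?thesis by (rule plucker_in_W2_replace_thd) (use ijk mid 4 n2 r3 in auto)
  qed
qed

lemma plucker_in_W2_all:
  assumes r3: "r \<ge> 3" and base: "plucker_in_W2 r 0 1 2 r"
    and a: "a < nat_dim r" and b: "b < nat_dim r" and c: "c < nat_dim r" and d: "d < nat_dim r"
  shows "plucker_in_W2 r a b c d"
proof -
  have rn: "r < nat_dim r" by (simp add: nat_dim_def)
  note off_mid = plucker_in_W2_off_mid[OF r3 base]
  show ?thesis
  proof (cases "distinct [a,b,c,d]")
    case False then show ?thesis by (rule plucker_in_W2_not_distinct)
  next
    case True
    consider "d = r" | "c = r" | "b = r" | "a = r" | "a \<noteq> r" "b \<noteq> r" "c \<noteq> r" "d \<noteq> r" by blast
    then show ?thesis
    proof cases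
      case 1 then show ?thesis using off_mid[of a b c] True a b c by auto
    next
      case 2
      have "plucker_in_W2 r a b d r" using off_mid[of a b d] True a b d 2 by auto
      from plucker_in_W2_swap34[OF this] show ?thesis using 2 by simp
    next
      case 3
      have "plucker_in_W2 r a c d r" using off_mid[of a c d] True a c d 3 by auto
      then have "plucker_in_W2 r a c r d" by (rule plucker_in_W2_swap34)
      from plucker_in_W2_swap23[OF this] show ?thesis using 3 by simp
    next
      case 4
      have "plucker_in_W2 r b c d r" using off_mid[of b c d] True b c d 4 by auto
      then have "plucker_in_W2 r b c r d" by (rule plucker_in_W2_swap34)
      then have "plucker_in_W2 r b r c d" by (rule plucker_in_W2_swap23)
      from plucker_in_W2_swap12[OF this] show ?thesis using 4 by simp
    next
      case 5
      have "plucker_in_W2 r a b c r" using off_mid[of a b c] True a b c 5 by auto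
      then show ?thesis by (rule plucker_in_W2_replace_last) (use a b c d rn 5 True in auto)
    qed
  qed
qed

lemma eps_apply: "eps i k = (if k = i then 1 else 0)" by (simp add: eps_def)

lemma root_vec_eps_plus:
  assumes ij: "1 \<le> i" "i < j" "j \<le> r"
  shows "root_vec r (eps i + eps j) = e_plus r i j"
proof -
  have n1: "\<not> (\<exists>i' j'. 1 \<le> i' \<and> i' < j' \<and> j' \<le> r \<and> eps i + eps j = eps i' - eps j')"
  proof
    assume "\<exists>i' j'. 1 \<le> i' \<and> i' < j' \<and> j' \<le> r \<and> eps i + eps j = eps i' - eps j'"
    then obtain i' j' where h: "i' < j'" "eps i + eps j = eps i' - eps j'" by blast
    have "eps i j' + eps j j' = eps i' j' - eps j' j'" using fun_cong[OF h(2), of j'] by simp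
    then show False using h(1) by (auto simp: eps_apply split: if_splits)
  qed
  have e2: "\<exists>i' j'. 1 \<le> i' \<and> i' < j' \<and> j' \<le> r \<and> eps i + eps j = eps i' + eps j'" using ij by blast
  have uniq: "(i', j') = (i, j)" if h: "1 \<le> i' \<and> i' < j' \<and> j' \<le> r \<and> eps i + eps j = eps i' + eps j'" for i' j'
  proof -
    have e: "eps i + eps j = eps i' + eps j'" using h by simp
    have a: "eps i i + eps j i = eps i' i + eps j' i" using fun_cong[OF e, of i] by simp
    have b: "eps i j + eps j j = eps i' j + eps j' j" using fun_cong[OF e, of j] by simp
    have c: "eps i i' + eps j i' = eps i' i' + eps j' i'" using fun_cong[OF e, of i'] by simp
    show ?thesis using a b c ij h by (auto simp: eps_apply split: if_splits)
  qed
  have "(SOME (i', j'). 1 \<le> i' \<and> i' < j' \<and> j' \<le> r \<and> eps i + eps j = eps i' + eps j') = (i, j)"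
  proof (rule some_equality)
    show "case (i, j) of (i', j') \<Rightarrow> 1 \<le> i' \<and> i' < j' \<and> j' \<le> r \<and> eps i + eps j = eps i' + eps j'"
      using ij by simp
  next
    fix t assume "case t of (i', j') \<Rightarrow> 1 \<le> i' \<and> i' < j' \<and> j' \<le> r \<and> eps i + eps j = eps i' + eps j'"
    then show "t = (i, j)" using uniq by (cases t) auto
  qed
  note sm = this
  show ?thesis unfolding root_vec_def if_not_P[OF n1] if_P[OF e2] sm by simp
qed

lemma root_vec_eps:
  assumes i: "1 \<le> i" "i \<le> r"
  shows "root_vec r (eps i) = e_short r i"
proof -
  have n1: "\<not> (\<exists>i' j'. 1 \<le> i' \<and> i' < j' \<and> j' \<le> r \<and> eps i = eps i' - eps j')"
  proof
    assume "\<exists>i' j'. 1 \<le> i' \<and> i' < j' \<and> j' \<le> r \<and> eps i = eps i' - eps j'"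
    then obtain i' j' where h: "i' < j'" "eps i = eps i' - eps j'" by blast
    have "eps i j' = eps i' j' - eps j' j'" using fun_cong[OF h(2), of j'] by simp
    then show False using h(1) by (auto simp: eps_apply split: if_splits)
  qed
  have n2: "\<not> (\<exists>i' j'. 1 \<le> i' \<and> i' < j' \<and> j' \<le> r \<and> eps i = eps i' + eps j')"
  proof
    assume "\<exists>i' j'. 1 \<le> i' \<and> i' < j' \<and> j' \<le> r \<and> eps i = eps i' + eps j'"
    then obtain i' j' where h: "i' < j'" "eps i = eps i' + eps j'" by blast
    have "eps i j' = eps i' j' + eps j' j'" "eps i i' = eps i' i' + eps j' i'"
      using fun_cong[OF h(2), of j'] fun_cong[OF h(2), of i'] by simp_all
    then have "eps i j' = 1" "eps i i' = 1" using h(1) by (simp_all add: eps_apply)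
    then have "j' = i" "i' = i" by (simp_all add: eps_apply split: if_splits)
    then show False using h(1) by simp
  qed
  have "(SOME i'. 1 \<le> i' \<and> i' \<le> r \<and> eps i = eps i') = i"
  proof (rule some_equality)
    fix i' assume h: "1 \<le> i' \<and> i' \<le> r \<and> eps i = eps i'"
    have "eps i i' = eps i' i'" using h by simp
    then show "i' = i" by (auto simp: eps_apply split: if_splits)
  qed (use i in simp)
  then show ?thesis unfolding root_vec_def using n1 n2 i by auto
qed

lemma inv_form_e_plus:
  assumes x: "x \<in> carrier_mat (nat_dim r) (nat_dim r)" and ij: "1 \<le> i" "i \<le> r" "1 \<le> j" "j \<le> r"
  shows "inv_form (e_plus r i j) x = - (if (i, j) = (2, 3) then -1 else 1) * alt_entry r x (i-1) (j-1)"
proof -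
  let ?n = "nat_dim r"
  have n: "pos_idx r i < ?n" "pos_idx r j < ?n" "neg_idx r i < ?n" "neg_idx r j < ?n"
    using ij by (auto simp: pos_idx_def neg_idx_def nat_dim_def)
  have "inv_form (e_plus r i j) x = (if (i, j) = (2, 3) then -1 else 1) *
     (x $$ (neg_idx r j, pos_idx r i) / 2 - x $$ (neg_idx r i, pos_idx r j) / 2)"
    unfolding e_plus_def inv_form_smult_diff[OF x unit_mat_carrier unit_mat_carrier]
    by (simp add: inv_form_unit_mat[OF x] n)
  moreover have "neg_idx r j = 2*r - (j-1)" "neg_idx r i = 2*r - (i-1)"
    using ij by (auto simp: neg_idx_def)
  ultimately show ?thesis unfolding alt_entry_def form_entry_def pos_idx_def by (simp add: field_simps)
qed

lemma inv_form_e_short: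
  assumes x: "x \<in> carrier_mat (nat_dim r) (nat_dim r)" and i: "1 \<le> i" "i \<le> r"
  shows "inv_form (e_short r i) x = - complex_of_real (sqrt 2) * alt_entry r x (i-1) r"
proof -
  let ?n = "nat_dim r"
  have n: "pos_idx r i < ?n" "neg_idx r i < ?n" "mid_idx r < ?n"
    using i by (auto simp: pos_idx_def neg_idx_def nat_dim_def mid_idx_def)
  have "inv_form (e_short r i) x = complex_of_real (sqrt 2) *
     (x $$ (mid_idx r, pos_idx r i) / 2 - x $$ (neg_idx r i, mid_idx r) / 2)"
    unfolding e_short_def inv_form_smult_diff[OF x unit_mat_carrier unit_mat_carrier]
    by (simp add: inv_form_unit_mat[OF x] n)
  moreover have "neg_idx r i = 2*r - (i-1)" "mid_idx r = 2*r - r"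
    using i by (auto simp: neg_idx_def mid_idx_def)
  ultimately show ?thesis unfolding alt_entry_def form_entry_def pos_idx_def by (simp add: field_simps)
qed

lemma w2_roots_ge4:
  assumes "r \<ge> 4"
  shows "theta2 r = eps 3 + eps 4" "beta1 r + theta2 r = eps 2 + eps 4"
    "delta1 r + theta2 r = eps 1 + eps 3" "beta2 r + theta2 r = eps 2 + eps 3"
    "delta2 r + theta2 r = eps 1 + eps 4"
  using assms by (auto intro!: ext simp: theta2_def beta1_def delta1_def beta2_def delta2_def simple_root_def eps_def)

lemma w2_roots_3:
  shows "theta2 3 = eps 3" "beta1 3 + theta2 3 = eps 2"
    "delta1 3 + theta2 3 = eps 1 + eps 3" "beta2 3 + theta2 3 = eps 2 + eps 3"
    "delta2 3 + theta2 3 = eps 1"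
  by (auto intro!: ext simp: theta2_def beta1_def delta1_def beta2_def delta2_def simple_root_def eps_def)

lemma s2_eval_w2_ge4:
  assumes r: "r \<ge> 4" and x: "x \<in> carrier_mat (nat_dim r) (nat_dim r)"
  shows "s2_eval (w2 r) x = plucker r x 0 1 2 3"
proof -
  have rv0: "root_vec r (theta r) = e_plus r 1 2" unfolding theta_def by (rule root_vec_eps_plus) (use r in auto)
  have rv1: "root_vec r (theta2 r) = e_plus r 3 4" unfolding w2_roots_ge4(1)[OF r] by (rule root_vec_eps_plus) (use r in auto)
  have rv2: "root_vec r (beta1 r + theta2 r) = e_plus r 2 4" unfolding w2_roots_ge4(2)[OF r] by (rule root_vec_eps_plus) (use r in auto)
  have rv3: "root_vec r (delta1 r + theta2 r) = e_plus r 1 3" unfolding w2_roots_ge4(3)[OF r] by (rule root_vec_eps_plus) (use r in auto)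
  have rv4: "root_vec r (beta2 r + theta2 r) = e_plus r 2 3" unfolding w2_roots_ge4(4)[OF r] by (rule root_vec_eps_plus) (use r in auto)
  have rv5: "root_vec r (delta2 r + theta2 r) = e_plus r 1 4" unfolding w2_roots_ge4(5)[OF r] by (rule root_vec_eps_plus) (use r in auto)
  note rv = rv0 rv1 rv2 rv3 rv4 rv5
  show ?thesis unfolding w2_def rv s2_eval_def using r
    by (simp add: inv_form_e_plus[OF x] plucker_def algebra_simps)
qed

lemma s2_eval_w2_3:
  assumes x: "x \<in> carrier_mat (nat_dim 3) (nat_dim 3)"
  shows "s2_eval (w2 3) x = complex_of_real (sqrt 2) * plucker 3 x 0 1 2 3"
proof -
  have rv0: "root_vec 3 (theta 3) = e_plus 3 1 2" unfolding theta_def by (rule root_vec_eps_plus) auto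
  have rv1: "root_vec 3 (theta2 3) = e_short 3 3" unfolding w2_roots_3(1) by (rule root_vec_eps) auto
  have rv2: "root_vec 3 (beta1 3 + theta2 3) = e_short 3 2" unfolding w2_roots_3(2) by (rule root_vec_eps) auto
  have rv3: "root_vec 3 (delta1 3 + theta2 3) = e_plus 3 1 3" unfolding w2_roots_3(3) by (rule root_vec_eps_plus) auto
  have rv4: "root_vec 3 (beta2 3 + theta2 3) = e_plus 3 2 3" unfolding w2_roots_3(4) by (rule root_vec_eps_plus) auto
  have rv5: "root_vec 3 (delta2 3 + theta2 3) = e_short 3 1" unfolding w2_roots_3(5) by (rule root_vec_eps) auto
  note rv = rv0 rv1 rv2 rv3 rv4 rv5
  show ?thesis unfolding w2_def rv s2_eval_def
    by (simp add: inv_form_e_plus[OF x] inv_form_e_short[OF x] plucker_def algebra_simps)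
qed

lemma plucker_0123_in_W2:
  assumes r: "r \<ge> 3"
  shows "plucker_in_W2 r 0 1 2 3"
proof (cases "r = 3")
  case True
  have "W2_realizes 3 (\<lambda>x. s2_eval (w2 3) x)" unfolding W2_realizes_def by (rule bexI[OF _ W2.gen]) simp
  then have "W2_realizes 3 (\<lambda>x. inverse (complex_of_real (sqrt 2)) * s2_eval (w2 3) x)" by (rule W2_realizes_smult)
  then have "plucker_in_W2 3 0 1 2 3" unfolding plucker_in_W2_def
    by (rule W2_realizes_cong) (simp add: s2_eval_w2_3)
  then show ?thesis using True by simp
next
  case False
  then have r4: "r \<ge> 4" using r by simp
  have "W2_realizes r (\<lambda>x. s2_eval (w2 r) x)" unfolding W2_realizes_def by (rule bexI[OF _ W2.gen]) simp
  then show ?thesis unfolding plucker_in_W2_def by (rule W2_realizes_cong) (simp add: s2_eval_w2_ge4[OF r4])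
qed

lemma plucker_012_mid_in_W2:
  assumes r: "r \<ge> 3"
  shows "plucker_in_W2 r 0 1 2 r"
proof (cases "r = 3")
  case True then show ?thesis using plucker_0123_in_W2[OF r] by simp
next
  case False
  then show ?thesis
    by (intro plucker_in_W2_move_to_mid[OF plucker_0123_in_W2[OF r]]) (use r in \<open>auto simp: nat_dim_def\<close>)
qed

lemma plucker_vanish_on_zero_locus:
  assumes r: "r \<ge> 3" and x: "x \<in> zero_locus_W2 r"
    and a: "a < nat_dim r" and b: "b < nat_dim r" and c: "c < nat_dim r" and d: "d < nat_dim r"
  shows "plucker r x a b c d = 0"
proof -
  have "plucker_in_W2 r a b c d" by (rule plucker_in_W2_all[OF r plucker_012_mid_in_W2[OF r] a b c d])
  then obtain L where L: "L \<in> W2 r" and e: "\<forall>y \<in> carrier_mat (nat_dim r) (nat_dim r). s2_eval L y = plucker r y a b c d"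
    unfolding plucker_in_W2_def W2_realizes_def by blast
  have xc: "x \<in> carrier_mat (nat_dim r) (nat_dim r)" and z: "s2_eval L x = 0"
    using x L unfolding zero_locus_W2_def so_alg_def by auto
  show ?thesis using e xc z by simp
qed

section \<open>The Jordan matrix of type (3, 1^(n-3))\<close>

lemma diag_block_mat_zero_blocks: "diag_block_mat (replicate m (jordan_block 1 (0::complex))) = 0\<^sub>m m m"
proof (induction m)
  case 0 then show ?case by simp
next
  case (Suc m)
  have j: "jordan_block 1 (0::complex) = 0\<^sub>m 1 1" by (auto intro!: eq_matI)
  show ?case using Suc by (auto simp: j Let_def intro!: eq_matI)
qed

definition jordan_3_1 :: "nat \<Rightarrow> complex mat" where
  "jordan_3_1 n = mat n n (\<lambda>(a,b). if (a = 0 \<and> b = 1) \<or> (a = 1 \<and> b = 2) then 1 else 0)"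

lemma jordan_matrix_3_1: "jordan_matrix ((3, 0::complex) # replicate m (1, 0)) = jordan_3_1 (3 + m)"
proof -
  have "jordan_matrix ((3, 0::complex) # replicate m (1, 0)) =
     diag_block_mat (jordan_block 3 0 # replicate m (jordan_block 1 0))"
    unfolding jordan_matrix_def by simp
  also have "\<dots> = four_block_mat (jordan_block 3 0) (0\<^sub>m 3 m) (0\<^sub>m m 3) (0\<^sub>m m m)"
    unfolding diag_block_mat.simps Let_def diag_block_mat_zero_blocks by simp
  also have "\<dots> = jordan_3_1 (3 + m)"
    by (rule eq_matI) (auto simp: jordan_3_1_def)
  finally show ?thesis .
qed

lemma jordan_3_1_carrier[simp]: "jordan_3_1 n \<in> carrier_mat n n" unfolding jordan_3_1_def by simp

lemma dim_jordan_3_1[simp]: "dim_row (jordan_3_1 n) = n" "dim_col (jordan_3_1 n) = n" unfolding jordan_3_1_def by simp_all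

lemma jordan_3_1_mult_vec:
  assumes n: "n \<ge> 3" and z: "z \<in> carrier_vec n"
  shows "jordan_3_1 n *\<^sub>v z = vec n (\<lambda>a. if a = 0 then z $ 1 else if a = 1 then z $ 2 else 0)"
    (is "_ = ?v")
proof (rule eq_vecI)
  fix a assume "a < dim_vec ?v"
  then have a: "a < n" by simp
  have "(jordan_3_1 n *\<^sub>v z) $ a = (\<Sum>c<n. jordan_3_1 n $$ (a,c) * z $ c)"
    by (rule index_mult_mat_vec_sum[OF jordan_3_1_carrier z a])
  also have "\<dots> = (\<Sum>c<n. (if a = 0 \<and> c = 1 then z $ 1 else 0) + (if a = 1 \<and> c = 2 then z $ 2 else 0))"
    by (rule sum.cong) (auto simp: jordan_3_1_def a)
  also have "\<dots> = ?v $ a"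
    using n a by (simp add: sum.distrib)
  finally show "(jordan_3_1 n *\<^sub>v z) $ a = ?v $ a" .
qed simp

lemma mult_eq_mult_jordan_3_1:
  fixes y S :: "complex mat"
  assumes y: "y \<in> carrier_mat n n" and S: "S \<in> carrier_mat n n" and n: "3 \<le> n"
    and col0: "y *\<^sub>v col S 0 = 0\<^sub>v n" and col1: "y *\<^sub>v col S 1 = col S 0"
    and col2: "y *\<^sub>v col S 2 = col S 1"
    and cols: "\<And>c. 3 \<le> c \<Longrightarrow> c < n \<Longrightarrow> y *\<^sub>v col S c = 0\<^sub>v n"
  shows "y * S = S * jordan_3_1 n"
proof (rule eq_matI)
  fix k c assume "k < dim_row (S * jordan_3_1 n)" and "c < dim_col (S * jordan_3_1 n)"
  then have k: "k < n" and c: "c < n" using S by auto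
  have "(y * S) $$ (k, c) = (y *\<^sub>v col S c) $ k" using k c y S by simp
  also have "\<dots> = (if c = 1 then S $$ (k, 0) else if c = 2 then S $$ (k, 1) else 0)"
  proof -
    consider "c = 0" | "c = 1" | "c = 2" | "3 \<le> c" by linarith
    then show ?thesis using col0 col1 col2 cols[of c] k c S by cases auto
  qed
  also have "\<dots> = (\<Sum>b<n. S $$ (k, b) * jordan_3_1 n $$ (b, c))"
  proof -
    have "(\<Sum>b<n. S $$ (k, b) * jordan_3_1 n $$ (b, c)) =
        (\<Sum>b<n. (if b = 0 \<and> c = 1 then S $$ (k, 0) else 0) + (if b = 1 \<and> c = 2 then S $$ (k, 1) else 0))"
      by (rule sum.cong) (auto simp: jordan_3_1_def c)
    then show ?thesis using n by (simp add: sum.distrib)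
  qed
  also have "\<dots> = (S * jordan_3_1 n) $$ (k, c)"
    by (rule index_mult_mat_sum[symmetric, OF S jordan_3_1_carrier k c])
  finally show "(y * S) $$ (k, c) = (S * jordan_3_1 n) $$ (k, c)" .
qed (use y S in auto)

lemma jordan_3_1_intertwiner_kernel:
  fixes y S :: "complex mat"
  assumes y: "y \<in> carrier_mat n n" and S: "S \<in> carrier_mat n n" and n: "3 \<le> n"
    and yS: "y * S = S * jordan_3_1 n" and col0: "col S 0 \<noteq> 0\<^sub>v n"
    and z: "z \<in> carrier_vec n" and Sz: "S *\<^sub>v z = 0\<^sub>v n"
  shows "z $ 1 = 0" "z $ 2 = 0"
proof -
  have intertwine: "S *\<^sub>v (jordan_3_1 n *\<^sub>v v) = y *\<^sub>v (S *\<^sub>v v)" if "v \<in> carrier_vec n" for v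
    using assoc_mult_mat_vec[OF S jordan_3_1_carrier that] assoc_mult_mat_vec[OF y S that] yS by simp
  have first_col: "S *\<^sub>v vec n (\<lambda>a. if a = 0 then \<alpha> else 0) = \<alpha> \<cdot>\<^sub>v col S 0" for \<alpha>
  proof (rule eq_vecI)
    fix k assume "k < dim_vec (\<alpha> \<cdot>\<^sub>v col S 0)"
    then have k: "k < n" using S by simp
    have "(S *\<^sub>v vec n (\<lambda>a. if a = 0 then \<alpha> else 0)) $ k = (\<Sum>c<n. S $$ (k, c) * (if c = 0 then \<alpha> else 0))"
      by (subst index_mult_mat_vec_sum[OF S _ k]) (auto intro!: sum.cong)
    also have "\<dots> = (\<Sum>c<n. if c = 0 then S $$ (k, 0) * \<alpha> else 0)"
      by (rule sum.cong) auto
    finally have "(S *\<^sub>v vec n (\<lambda>a. if a = 0 then \<alpha> else 0)) $ k = (\<Sum>c<n. if c = 0 then S $$ (k, 0) * \<alpha> else 0)" .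
    then show "(S *\<^sub>v vec n (\<lambda>a. if a = 0 then \<alpha> else 0)) $ k = (\<alpha> \<cdot>\<^sub>v col S 0) $ k"
      using k n S by simp
  qed (use S in simp)
  have scalar_zero: "\<alpha> = 0" if "S *\<^sub>v vec n (\<lambda>a. if a = 0 then \<alpha> else 0) = 0\<^sub>v n" for \<alpha>
  proof (rule ccontr)
    assume "\<alpha> \<noteq> 0"
    have "col S 0 = inverse \<alpha> \<cdot>\<^sub>v (\<alpha> \<cdot>\<^sub>v col S 0)" using \<open>\<alpha> \<noteq> 0\<close> by (simp add: smult_smult_assoc)
    also have "\<dots> = 0\<^sub>v n" using that S by (auto simp: first_col intro!: eq_vecI)
    finally show False using col0 by contradiction
  qed
  have y0: "y *\<^sub>v 0\<^sub>v n = 0\<^sub>v n" using y by (auto intro!: eq_vecI simp: scalar_prod_def)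
  have Jz: "jordan_3_1 n *\<^sub>v z = vec n (\<lambda>a. if a = 0 then z $ 1 else if a = 1 then z $ 2 else 0)"
    by (rule jordan_3_1_mult_vec[OF n z])
  have "jordan_3_1 n *\<^sub>v (jordan_3_1 n *\<^sub>v z) = vec n (\<lambda>a. if a = 0 then z $ 2 else 0)"
    unfolding Jz jordan_3_1_mult_vec[OF n vec_carrier] using n by (auto intro!: eq_vecI)
  moreover have "S *\<^sub>v (jordan_3_1 n *\<^sub>v (jordan_3_1 n *\<^sub>v z)) = 0\<^sub>v n"
    using intertwine[OF mult_mat_vec_carrier[OF jordan_3_1_carrier z]] intertwine[OF z] Sz y0 by simp
  ultimately have "S *\<^sub>v vec n (\<lambda>a. if a = 0 then z $ 2 else 0) = 0\<^sub>v n" by simp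
  then show z2: "z $ 2 = 0" by (rule scalar_zero)
  have "jordan_3_1 n *\<^sub>v z = vec n (\<lambda>a. if a = 0 then z $ 1 else 0)"
    unfolding Jz z2 by (auto intro!: eq_vecI)
  moreover have "S *\<^sub>v (jordan_3_1 n *\<^sub>v z) = 0\<^sub>v n" using intertwine[OF z] Sz y0 by simp
  ultimately have "S *\<^sub>v vec n (\<lambda>a. if a = 0 then z $ 1 else 0) = 0\<^sub>v n" by simp
  then show "z $ 1 = 0" by (rule scalar_zero)
qed

(* In the basis y^2 v, y v, v, K 3, ..., K (n - 1) the matrix y becomes jordan_3_1 n; the
   pivot rows u and f c make these vectors linearly independent. *)
lemma similar_jordan_3_1_of_chain:
  fixes y :: "complex mat" and K :: "nat \<Rightarrow> complex vec"
  assumes y: "y \<in> carrier_mat n n" and n: "3 \<le> n" and v: "v \<in> carrier_vec n"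
    and y3v: "y *\<^sub>v (y *\<^sub>v (y *\<^sub>v v)) = 0\<^sub>v n"
    and u: "u < n" "(y *\<^sub>v (y *\<^sub>v v)) $ u \<noteq> 0"
    and K: "\<And>c. 3 \<le> c \<Longrightarrow> c < n \<Longrightarrow> K c \<in> carrier_vec n \<and> y *\<^sub>v K c = 0\<^sub>v n \<and> K c $ u = 0"
    and f: "\<And>c. 3 \<le> c \<Longrightarrow> c < n \<Longrightarrow> f c < n"
    and pivot: "\<And>c c'. 3 \<le> c \<Longrightarrow> c < n \<Longrightarrow> 3 \<le> c' \<Longrightarrow> c' < n \<Longrightarrow>
      K c' $ f c = (if c' = c then 1 else 0)"
  shows "similar_mat y (jordan_3_1 n)"
proof -
  define w where "w = y *\<^sub>v (y *\<^sub>v v)"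
  define F where "F c = (if c = 0 then w else if c = 1 then y *\<^sub>v v else if c = 2 then v else K c)" for c
  have Fc: "F c \<in> carrier_vec n" if "c < n" for c
    unfolding F_def w_def using v y K[of c] that by auto
  define S where "S = mat n n (\<lambda>(k, c). F c $ k)"
  have Sc: "S \<in> carrier_mat n n" unfolding S_def by simp
  have colS: "col S c = F c" if "c < n" for c
    unfolding S_def using that Fc[OF that] by (auto intro!: eq_vecI)
  have yS: "y * S = S * jordan_3_1 n"
    by (rule mult_eq_mult_jordan_3_1[OF y Sc n]) (use n y3v K in \<open>auto simp: colS F_def w_def\<close>)
  have inj: "z = 0\<^sub>v n" if z: "z \<in> carrier_vec n" and Sz: "S *\<^sub>v z = 0\<^sub>v n" for z
  proof -
    have "col S 0 $ u \<noteq> 0" using colS n u by (simp add: F_def w_def)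
    then have "col S 0 \<noteq> 0\<^sub>v n" using u by auto
    note z12 = jordan_3_1_intertwiner_kernel[OF y Sc n yS this z Sz]
    show ?thesis
      by (rule mult_mat_vec_zero_by_pivots[OF Sc n z Sz z12 u(1), where f = f])
        (use n u K f pivot in \<open>auto simp: S_def F_def w_def\<close>)
  qed
  show ?thesis by (rule similar_mat_of_injective_intertwiner[OF y jordan_3_1_carrier Sc yS inj])
qed

section \<open>Elements of rank two\<close>

(* wedge2 r P Q U V = J (P U^T - Q V^T). Products of such matrices keep this shape, and
   wedge r P Q is the element of so(2r+1) given by the 2-vector P wedge Q. *)
definition wedge2 :: "nat \<Rightarrow> (nat \<Rightarrow> complex) \<Rightarrow> (nat \<Rightarrow> complex) \<Rightarrow> (nat \<Rightarrow> complex) \<Rightarrow> (nat \<Rightarrow> complex) \<Rightarrow> complex mat" where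
  "wedge2 r P Q U V = mat (nat_dim r) (nat_dim r) (\<lambda>(i,j). P (2*r - i) * U j - Q (2*r - i) * V j)"

definition Jpair :: "nat \<Rightarrow> (nat \<Rightarrow> complex) \<Rightarrow> (nat \<Rightarrow> complex) \<Rightarrow> complex" where
  "Jpair r u w = (\<Sum>c<nat_dim r. u c * w (2*r - c))"

abbreviation wedge :: "nat \<Rightarrow> (nat \<Rightarrow> complex) \<Rightarrow> (nat \<Rightarrow> complex) \<Rightarrow> complex mat" where
  "wedge r P Q \<equiv> wedge2 r P Q Q P"

lemma wedge2_carrier[simp]: "wedge2 r P Q U V \<in> carrier_mat (nat_dim r) (nat_dim r)"
  unfolding wedge2_def by simp

lemma dim_wedge2[simp]: "dim_row (wedge2 r P Q U V) = nat_dim r" "dim_col (wedge2 r P Q U V) = nat_dim r"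
  unfolding wedge2_def by simp_all

lemma index_wedge2: "i < nat_dim r \<Longrightarrow> j < nat_dim r \<Longrightarrow> wedge2 r P Q U V $$ (i,j) = P (2*r - i) * U j - Q (2*r - i) * V j"
  unfolding wedge2_def by simp

lemma Jpair_sym: "Jpair r u w = Jpair r w u"
  unfolding Jpair_def
proof (rule sum.reindex_bij_witness[of _ "\<lambda>c. 2*r - c" "\<lambda>c. 2*r - c"])
qed (auto simp: nat_dim_def mult.commute)

lemma wedge2_mult:
  "wedge2 r P Q U V * wedge2 r P' Q' U' V' =
   wedge2 r P Q (\<lambda>j. Jpair r U P' * U' j - Jpair r U Q' * V' j) (\<lambda>j. Jpair r V P' * U' j - Jpair r V Q' * V' j)"
  (is "_ = ?R")
proof (rule eq_matI)
  fix i j assume "i < dim_row ?R" and "j < dim_col ?R"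
  then have i: "i < nat_dim r" and j: "j < nat_dim r" by simp_all
  let ?n = "nat_dim r"
  have "(wedge2 r P Q U V * wedge2 r P' Q' U' V') $$ (i,j) =
    (\<Sum>c<?n. (P (2*r - i) * U c - Q (2*r - i) * V c) * (P' (2*r - c) * U' j - Q' (2*r - c) * V' j))"
    by (subst index_mult_mat_sum[OF wedge2_carrier wedge2_carrier i j]) (auto intro!: sum.cong simp: index_wedge2 i j)
  also have "\<dots> = (\<Sum>c<?n. P (2*r - i) * U' j * (U c * P' (2*r - c)) - P (2*r - i) * V' j * (U c * Q' (2*r - c))
     - Q (2*r - i) * U' j * (V c * P' (2*r - c)) + Q (2*r - i) * V' j * (V c * Q' (2*r - c)))"
    by (rule sum.cong) (simp_all add: algebra_simps)
  also have "\<dots> = P (2*r - i) * U' j * Jpair r U P' - P (2*r - i) * V' j * Jpair r U Q'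
     - Q (2*r - i) * U' j * Jpair r V P' + Q (2*r - i) * V' j * Jpair r V Q'"
    unfolding Jpair_def by (simp add: sum.distrib sum_subtractf sum_distrib_left)
  also have "\<dots> = ?R $$ (i,j)"
    by (simp add: index_wedge2 i j algebra_simps)
  finally show "(wedge2 r P Q U V * wedge2 r P' Q' U' V') $$ (i,j) = ?R $$ (i,j)" .
qed simp_all

definition wedge_cube_coeff :: "nat \<Rightarrow> (nat \<Rightarrow> complex) \<Rightarrow> (nat \<Rightarrow> complex) \<Rightarrow> complex" where
  "wedge_cube_coeff r P Q = Jpair r P Q ^ 2 - Jpair r P P * Jpair r Q Q"

lemma Jpair_lincomb: "Jpair r u (\<lambda>j. a * v j - b * w j) = a * Jpair r u v - b * Jpair r u w"
  unfolding Jpair_def by (simp add: sum_subtractf sum_distrib_left algebra_simps)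

lemma Jpair_add_scaled: "Jpair r u (\<lambda>c. v c + k * z c) = Jpair r u v + k * Jpair r u z"
  unfolding Jpair_def by (simp add: sum.distrib sum_distrib_left algebra_simps)

lemma Jpair_two_point:
  assumes a: "a < nat_dim r" and b: "b < nat_dim r" and ab: "a \<noteq> b"
  shows "Jpair r u (\<lambda>c. if c = 2*r - a then \<mu> else if c = 2*r - b then \<nu> else 0) = u a * \<mu> + u b * \<nu>"
proof -
  have "Jpair r u (\<lambda>c. if c = 2*r - a then \<mu> else if c = 2*r - b then \<nu> else 0)
     = (\<Sum>c<nat_dim r. (if c = a then u a * \<mu> else 0) + (if c = b then u b * \<nu> else 0))"
    unfolding Jpair_def
  proof (rule sum.cong[OF refl])
    fix c assume c: "c \<in> {..<nat_dim r}"
    have "2*r - c = 2*r - a \<longleftrightarrow> c = a" "2*r - c = 2*r - b \<longleftrightarrow> c = b"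
      using c a b by (auto simp: nat_dim_def)
    then show "u c * (if 2*r - c = 2*r - a then \<mu> else if 2*r - c = 2*r - b then \<nu> else 0)
       = (if c = a then u a * \<mu> else 0) + (if c = b then u b * \<nu> else 0)" using ab by auto
  qed
  also have "\<dots> = u a * \<mu> + u b * \<nu>" using a b by (simp add: sum.distrib)
  finally show ?thesis .
qed

lemma wedge_sq: "wedge r P Q * wedge r P Q = wedge2 r P Q (\<lambda>j. Jpair r Q P * Q j - Jpair r Q Q * P j) (\<lambda>j. Jpair r P P * Q j - Jpair r P Q * P j)"
  by (rule wedge2_mult)

lemma wedge_cube: "wedge r P Q * (wedge r P Q * wedge r P Q) = wedge_cube_coeff r P Q \<cdot>\<^sub>m wedge r P Q"
proof -
  have "wedge r P Q * (wedge r P Q * wedge r P Q) = wedge2 r P Q (\<lambda>j. wedge_cube_coeff r P Q * Q j) (\<lambda>j. wedge_cube_coeff r P Q * P j)"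
    unfolding wedge_sq wedge2_mult Jpair_lincomb
    by (rule arg_cong2[where f = "wedge2 r P Q"]) (auto simp: wedge_cube_coeff_def Jpair_sym[of r Q P] power2_eq_square algebra_simps)
  also have "\<dots> = wedge_cube_coeff r P Q \<cdot>\<^sub>m wedge r P Q"
    by (rule eq_matI) (auto simp: wedge2_def algebra_simps)
  finally show ?thesis .
qed

lemma wedge_in_so_alg: "wedge r P Q \<in> so_alg r"
  unfolding so_alg_iff_form_entry
proof (intro conjI allI impI)
  fix a b assume a: "a < nat_dim r" and b: "b < nat_dim r"
  have a': "2*r - a < nat_dim r" and b': "2*r - b < nat_dim r" by (auto simp: nat_dim_def)
  have aa: "2*r - (2*r - a) = a" "2*r - (2*r - b) = b" using a b by (auto simp: nat_dim_def)
  show "form_entry r (wedge r P Q) a b = - form_entry r (wedge r P Q) b a"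
    unfolding form_entry_def index_wedge2[OF a' b] index_wedge2[OF b' a] aa by simp
qed simp

lemma wedge_of_plucker_vanish:
  assumes x: "x \<in> so_alg r" and pf: "\<And>a b c d. a < nat_dim r \<Longrightarrow> b < nat_dim r \<Longrightarrow> c < nat_dim r \<Longrightarrow> d < nat_dim r \<Longrightarrow> plucker r x a b c d = 0"
    and nz: "x \<noteq> 0\<^sub>m (nat_dim r) (nat_dim r)"
  shows "\<exists>P Q. x = wedge r P Q"
proof -
  let ?n = "nat_dim r"
  have xc: "x \<in> carrier_mat ?n ?n" and skew: "\<And>a b. a < ?n \<Longrightarrow> b < ?n \<Longrightarrow> form_entry r x a b = - form_entry r x b a"
    using x unfolding so_alg_iff_form_entry by blast+
  have alt_eq_form: "alt_entry r x a b = form_entry r x a b" if "a < ?n" "b < ?n" for a b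
    unfolding alt_entry_def using skew[OF that] by simp
  obtain i j where i: "i < ?n" and j: "j < ?n" and e: "x $$ (i,j) \<noteq> 0"
    using nz xc by (metis eq_matI carrier_matD index_zero_mat)
  define a where "a = 2*r - i"
  have a: "a < ?n" unfolding a_def by (simp add: nat_dim_def)
  have ii: "2*r - a = i" using i unfolding a_def by (simp add: nat_dim_def)
  have pivot: "form_entry r x a j \<noteq> 0" unfolding form_entry_def ii using e .
  define P where "P c = form_entry r x a c / form_entry r x a j" for c
  define Q where "Q d = form_entry r x j d" for d
  have "x = wedge r P Q"
  proof (rule eq_matI)
    fix i' j' assume i': "i' < dim_row (wedge r P Q)" and j': "j' < dim_col (wedge r P Q)"
    have i'': "i' < ?n" and j'': "j' < ?n" using i' j' by auto
    define k where "k = 2*r - i'"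
    have k: "k < ?n" unfolding k_def by (simp add: nat_dim_def)
    have kk: "2*r - k = i'" using i'' unfolding k_def by (simp add: nat_dim_def)
    have "plucker r x a j k j' = 0" by (rule pf[OF a j k j''])
    then have "form_entry r x a j * form_entry r x k j' - form_entry r x a k * form_entry r x j j' + form_entry r x a j' * form_entry r x j k = 0"
      unfolding plucker_def alt_eq_form[OF a j] alt_eq_form[OF k j''] alt_eq_form[OF a k] alt_eq_form[OF j j''] alt_eq_form[OF a j''] alt_eq_form[OF j k] .
    then have "form_entry r x k j' = (form_entry r x a k * form_entry r x j j' - form_entry r x a j' * form_entry r x j k) / form_entry r x a j"
      using pivot by (simp add: field_simps)
    also have "\<dots> = P k * Q j' - Q k * P j'" unfolding P_def Q_def using pivot by (simp add: field_simps)
    finally have "form_entry r x k j' = P k * Q j' - Q k * P j'" .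
    moreover have "x $$ (i', j') = form_entry r x k j'" unfolding form_entry_def kk ..
    ultimately show "x $$ (i', j') = wedge r P Q $$ (i', j')"
      unfolding index_wedge2[OF i'' j''] k_def by simp
  qed (use xc in auto)
  then show ?thesis by blast
qed

definition pair_vec :: "nat \<Rightarrow> (nat \<Rightarrow> complex) \<Rightarrow> complex vec \<Rightarrow> complex" where
  "pair_vec r u z = (\<Sum>c<nat_dim r. u c * z $ c)"

lemma index_wedge_mult_vec:
  assumes z: "z \<in> carrier_vec (nat_dim r)" and k: "k < nat_dim r"
  shows "(wedge r P Q *\<^sub>v z) $ k = P (2*r - k) * pair_vec r Q z - Q (2*r - k) * pair_vec r P z"
proof -
  have "(wedge r P Q *\<^sub>v z) $ k = (\<Sum>c<nat_dim r. wedge r P Q $$ (k,c) * z $ c)"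
    by (rule index_mult_mat_vec_sum[OF wedge2_carrier z k])
  also have "\<dots> = (\<Sum>c<nat_dim r. P (2*r - k) * (Q c * z $ c) - Q (2*r - k) * (P c * z $ c))"
    by (rule sum.cong) (auto simp: index_wedge2 k algebra_simps)
  also have "\<dots> = P (2*r - k) * pair_vec r Q z - Q (2*r - k) * pair_vec r P z"
    unfolding pair_vec_def by (simp add: sum_subtractf sum_distrib_left)
  finally show ?thesis .
qed

(* The unit vector e_i corrected at s and t so that pair_vec annihilates it against P and Q;
   this needs the minor P s * Q t - Q s * P t to be nonzero. *)
definition wedge_kernel_vec :: "nat \<Rightarrow> (nat \<Rightarrow> complex) \<Rightarrow> (nat \<Rightarrow> complex) \<Rightarrow> nat \<Rightarrow> nat \<Rightarrow> nat \<Rightarrow> complex vec" where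
  "wedge_kernel_vec r P Q s t i = (let D = P s * Q t - Q s * P t;
      cf = (P i * Q t - Q i * P t) / D; df = (P s * Q i - Q s * P i) / D in
    vec (nat_dim r) (\<lambda>k. (if k = i then 1 else 0) - cf * (if k = s then 1 else 0) - df * (if k = t then 1 else 0)))"

lemma wedge_kernel_vec_carrier[simp]: "wedge_kernel_vec r P Q s t i \<in> carrier_vec (nat_dim r)"
  unfolding wedge_kernel_vec_def Let_def by simp

lemma index_wedge_kernel_vec:
  "k < nat_dim r \<Longrightarrow> wedge_kernel_vec r P Q s t i $ k = (if k = i then 1 else 0)
     - (P i * Q t - Q i * P t) / (P s * Q t - Q s * P t) * (if k = s then 1 else 0)
     - (P s * Q i - Q s * P i) / (P s * Q t - Q s * P t) * (if k = t then 1 else 0)"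
  unfolding wedge_kernel_vec_def Let_def by simp

lemma pair_vec_wedge_kernel_vec:
  assumes s: "s < nat_dim r" and t: "t < nat_dim r" and i: "i < nat_dim r"
  shows "pair_vec r u (wedge_kernel_vec r P Q s t i) = u i
     - (P i * Q t - Q i * P t) / (P s * Q t - Q s * P t) * u s
     - (P s * Q i - Q s * P i) / (P s * Q t - Q s * P t) * u t"
proof -
  let ?D = "P s * Q t - Q s * P t"
  let ?cf = "(P i * Q t - Q i * P t) / ?D" and ?df = "(P s * Q i - Q s * P i) / ?D"
  have "pair_vec r u (wedge_kernel_vec r P Q s t i) = (\<Sum>c<nat_dim r. (if c = i then u i else 0) - (if c = s then ?cf * u s else 0)
       - (if c = t then ?df * u t else 0))"
    unfolding pair_vec_def by (rule sum.cong) (auto simp: index_wedge_kernel_vec)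
  also have "\<dots> = u i - ?cf * u s - ?df * u t"
    using s t i by (simp add: sum_subtractf)
  finally show ?thesis .
qed

lemma wedge_mult_wedge_kernel_vec:
  assumes s: "s < nat_dim r" and t: "t < nat_dim r" and i: "i < nat_dim r"
    and D: "P s * Q t - Q s * P t \<noteq> 0"
  shows "wedge r P Q *\<^sub>v wedge_kernel_vec r P Q s t i = 0\<^sub>v (nat_dim r)"
proof -
  have lP: "pair_vec r P (wedge_kernel_vec r P Q s t i) = 0" unfolding pair_vec_wedge_kernel_vec[OF s t i] using D
    by (simp add: field_simps)
  have lQ: "pair_vec r Q (wedge_kernel_vec r P Q s t i) = 0" unfolding pair_vec_wedge_kernel_vec[OF s t i] using D
    by (simp add: field_simps)
  show ?thesis
  proof (rule eq_vecI)
    fix k assume "k < dim_vec (0\<^sub>v (nat_dim r) :: complex vec)"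
    then have k: "k < nat_dim r" by simp
    show "(wedge r P Q *\<^sub>v wedge_kernel_vec r P Q s t i) $ k = 0\<^sub>v (nat_dim r) $ k"
      unfolding index_wedge_mult_vec[OF wedge_kernel_vec_carrier k] lP lQ using k by simp
  qed simp
qed

lemma wedge_kernel_support:
  assumes s: "s < nat_dim r" and t: "t < nat_dim r" and st: "s \<noteq> t"
    and D: "P s * Q t - Q s * P t \<noteq> 0"
    and w: "w \<in> carrier_vec (nat_dim r)" and yw: "wedge r P Q *\<^sub>v w = 0\<^sub>v (nat_dim r)"
    and i0: "i0 < nat_dim r" "w $ i0 \<noteq> 0"
  shows "\<exists>u < nat_dim r. u \<noteq> s \<and> u \<noteq> t \<and> w $ u \<noteq> 0"
proof (rule ccontr)
  assume "\<not> ?thesis"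
  then have zero: "\<And>u. u < nat_dim r \<Longrightarrow> u \<noteq> s \<Longrightarrow> u \<noteq> t \<Longrightarrow> w $ u = 0" by blast
  have linw: "pair_vec r f w = f s * w $ s + f t * w $ t" for f
  proof -
    have "pair_vec r f w = (\<Sum>c<nat_dim r. (if c = s then f s * w $ s else 0) + (if c = t then f t * w $ t else 0))"
      unfolding pair_vec_def by (rule sum.cong) (use zero st in auto)
    then show ?thesis using s t by (simp add: sum.distrib)
  qed
  have s': "2*r - s < nat_dim r" and t': "2*r - t < nat_dim r" by (auto simp: nat_dim_def)
  have ss: "2*r - (2*r - s) = s" and tt: "2*r - (2*r - t) = t" using s t by (auto simp: nat_dim_def)
  have e1: "P s * pair_vec r Q w - Q s * pair_vec r P w = 0"
    using index_wedge_mult_vec[OF w s', of P Q] yw s' unfolding ss by simp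
  have e2: "P t * pair_vec r Q w - Q t * pair_vec r P w = 0"
    using index_wedge_mult_vec[OF w t', of P Q] yw t' unfolding tt by simp
  have "pair_vec r Q w = 0 \<and> pair_vec r P w = 0"
    by (rule cramer2_homogeneous[of "P s" _ "- Q s" _ "P t" "- Q t"]) (use e1 e2 D in \<open>auto simp: algebra_simps\<close>)
  then have f1: "Q s * w $ s + Q t * w $ t = 0" and f2: "P s * w $ s + P t * w $ t = 0"
    unfolding linw by auto
  have "w $ s = 0 \<and> w $ t = 0"
    by (rule cramer2_homogeneous[OF f1 f2]) (use D in \<open>auto simp: algebra_simps\<close>)
  then have "w $ i0 = 0" using zero[OF i0(1)] by (cases "i0 = s"; cases "i0 = t") auto
  then show False using i0 by simp
qed

lemma wedge_kernel_pivots: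
  assumes s: "s < nat_dim r" and t: "t < nat_dim r" and u: "u < nat_dim r" "u \<noteq> s" "u \<noteq> t"
    and D: "P s * Q t - Q s * P t \<noteq> 0"
  obtains K f where
    "\<And>c. 3 \<le> c \<Longrightarrow> c < nat_dim r \<Longrightarrow>
      K c \<in> carrier_vec (nat_dim r) \<and> wedge r P Q *\<^sub>v K c = 0\<^sub>v (nat_dim r) \<and> K c $ u = 0"
    "\<And>c. 3 \<le> c \<Longrightarrow> c < nat_dim r \<Longrightarrow> f c < nat_dim r"
    "\<And>c c'. 3 \<le> c \<Longrightarrow> c < nat_dim r \<Longrightarrow> 3 \<le> c' \<Longrightarrow> c' < nat_dim r \<Longrightarrow>
      K c' $ f c = (if c' = c then 1 else 0)"
proof -
  let ?n = "nat_dim r"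
  have st: "s \<noteq> t" using D by auto
  define f where "f c = indices_except ?n s t u ! (c - 3)" for c
  note dst = s t u(1) st u(2)[symmetric] u(3)[symmetric]
  have f: "f c < ?n" "f c \<noteq> s" "f c \<noteq> t" "f c \<noteq> u" if "3 \<le> c" "c < ?n" for c
    using indices_except_nth[OF dst that] unfolding f_def by auto
  have f_eq: "f c = f c' \<longleftrightarrow> c = c'" if "3 \<le> c" "c < ?n" "3 \<le> c'" "c' < ?n" for c c'
    using indices_except_nth_inj[OF dst that] unfolding f_def by auto
  define K where "K c = wedge_kernel_vec r P Q s t (f c)" for c
  have K_entry: "K c $ k = (if k = f c then 1 else 0)" if "3 \<le> c" "c < ?n" "k < ?n" "k \<noteq> s" "k \<noteq> t" for c k
    unfolding K_def using that by (simp add: index_wedge_kernel_vec)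
  show thesis
  proof (rule that[of K f])
    show "K c \<in> carrier_vec ?n \<and> wedge r P Q *\<^sub>v K c = 0\<^sub>v ?n \<and> K c $ u = 0" if "3 \<le> c" "c < ?n" for c
      using wedge_mult_wedge_kernel_vec[OF s t f(1)[OF that] D] K_entry[OF that u] f[OF that]
      by (simp add: K_def)
    show "K c' $ f c = (if c' = c then 1 else 0)" if "3 \<le> c" "c < ?n" "3 \<le> c'" "c' < ?n" for c c'
      using K_entry[OF that(3,4) f(1-3)[OF that(1,2)]] f_eq[OF that(3,4,1,2)] by auto
  qed (use f in auto)
qed

lemma wedge_in_orbit_3_1:
  assumes r1: "r \<ge> 1" and c0: "wedge_cube_coeff r P Q = 0"
    and sq: "wedge r P Q * wedge r P Q \<noteq> 0\<^sub>m (nat_dim r) (nat_dim r)"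
  shows "wedge r P Q \<in> orbit_3_1 r"
proof -
  define n where "n = nat_dim r"
  define y where "y = wedge r P Q"
  have yc: "y \<in> carrier_mat n n" unfolding y_def n_def by simp
  have n3: "n \<ge> 3" using r1 unfolding n_def nat_dim_def by simp
  obtain i0 j0 where i0: "i0 < n" and j0: "j0 < n" and yy0: "(y * y) $$ (i0, j0) \<noteq> 0"
  proof -
    have "y * y \<noteq> 0\<^sub>m n n" using sq unfolding y_def n_def .
    moreover have "y * y \<in> carrier_mat n n" using yc by simp
    ultimately show ?thesis using that by (metis eq_matI carrier_matD index_zero_mat)
  qed
  have "y \<noteq> 0\<^sub>m n n"
  proof
    assume "y = 0\<^sub>m n n"
    then have "y * y = 0\<^sub>m n n" by simp
    then show False using yy0 i0 j0 by simp
  qed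
  then obtain i1 t where i1: "i1 < n" and t: "t < n" and y1: "y $$ (i1, t) \<noteq> 0"
    using yc by (metis eq_matI carrier_matD index_zero_mat)
  define s where "s = 2*r - i1"
  have s: "s < n" unfolding s_def n_def nat_dim_def by simp
  have D: "P s * Q t - Q s * P t \<noteq> 0"
    using y1 i1 t unfolding y_def s_def by (simp add: index_wedge2 n_def)
  then have st: "s \<noteq> t" by auto
  define v where "v = (unit_vec n j0 :: complex vec)"
  have vc: "v \<in> carrier_vec n" unfolding v_def by simp
  have w_eq: "y *\<^sub>v (y *\<^sub>v v) = (y * y) *\<^sub>v v" using yc vc by simp
  have "((y * y) *\<^sub>v v) $ i0 \<noteq> 0"
    unfolding v_def using index_mult_mat_vec_unit[OF mult_carrier_mat[OF yc yc] j0 i0] yy0 by simp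
  then have wi0: "(y *\<^sub>v (y *\<^sub>v v)) $ i0 \<noteq> 0" unfolding w_eq .
  have y3v: "y *\<^sub>v (y *\<^sub>v (y *\<^sub>v v)) = 0\<^sub>v n"
  proof -
    have "y *\<^sub>v (y *\<^sub>v (y *\<^sub>v v)) = (y * (y * y)) *\<^sub>v v"
      unfolding w_eq using assoc_mult_mat_vec[OF yc mult_carrier_mat[OF yc yc] vc] by simp
    also have "\<dots> = 0\<^sub>v n" unfolding y_def n_def wedge_cube c0 using vc n_def by (auto intro!: eq_vecI)
    finally show ?thesis .
  qed
  obtain u where u: "u < n" "u \<noteq> s" "u \<noteq> t" "(y *\<^sub>v (y *\<^sub>v v)) $ u \<noteq> 0"
    using wedge_kernel_support[of s r t P Q "y *\<^sub>v (y *\<^sub>v v)" i0] s t st D yc vc y3v i0 wi0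
    unfolding n_def y_def by auto
  obtain K f where
    K: "\<And>c. 3 \<le> c \<Longrightarrow> c < nat_dim r \<Longrightarrow>
      K c \<in> carrier_vec (nat_dim r) \<and> wedge r P Q *\<^sub>v K c = 0\<^sub>v (nat_dim r) \<and> K c $ u = 0"
    and f: "\<And>c. 3 \<le> c \<Longrightarrow> c < nat_dim r \<Longrightarrow> f c < nat_dim r"
    and pivot: "\<And>c c'. 3 \<le> c \<Longrightarrow> c < nat_dim r \<Longrightarrow> 3 \<le> c' \<Longrightarrow> c' < nat_dim r \<Longrightarrow>
      K c' $ f c = (if c' = c then 1 else 0)"
    using wedge_kernel_pivots[OF s[unfolded n_def] t[unfolded n_def] u(1)[unfolded n_def] u(2,3) D] by blast
  have "similar_mat y (jordan_3_1 n)"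
    by (rule similar_jordan_3_1_of_chain[OF yc n3 vc y3v u(1,4) K[folded n_def y_def] f[folded n_def]
        pivot[folded n_def]])
  moreover have "jordan_matrix ((3, 0) # replicate (2 * r - 2) (1, 0)) = jordan_3_1 n"
    using jordan_matrix_3_1[of "2 * r - 2"] r1 unfolding n_def nat_dim_def by simp
  ultimately show ?thesis
    unfolding orbit_3_1_def jordan_nf_def y_def using wedge_in_so_alg by auto
qed

lemma isotropic_wedge_in_orbit_3_1:
  assumes r1: "r \<ge> 1" and pp: "Jpair r P P = 0" and pq: "Jpair r P Q = 0" and qq: "Jpair r Q Q \<noteq> 0"
    and j: "j < nat_dim r" "P j \<noteq> 0"
  shows "wedge r P Q \<in> orbit_3_1 r"
proof (rule wedge_in_orbit_3_1[OF r1])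
  show "wedge_cube_coeff r P Q = 0" unfolding wedge_cube_coeff_def pp pq by simp
  have j': "2*r - j < nat_dim r" by (simp add: nat_dim_def)
  have jj: "2*r - (2*r - j) = j" using j(1) by (simp add: nat_dim_def)
  have "(wedge r P Q * wedge r P Q) $$ (2*r - j, j) = - Jpair r Q Q * P j * P j"
    unfolding wedge_sq index_wedge2[OF j' j(1)] jj pp pq Jpair_sym[of r Q P] by (simp add: algebra_simps)
  moreover have "- Jpair r Q Q * P j * P j \<noteq> 0" using qq j(2) by simp
  ultimately have ne: "(wedge r P Q * wedge r P Q) $$ (2*r - j, j) \<noteq> 0" by simp
  show "wedge r P Q * wedge r P Q \<noteq> 0\<^sub>m (nat_dim r) (nat_dim r)"
  proof
    assume h: "wedge r P Q * wedge r P Q = 0\<^sub>m (nat_dim r) (nat_dim r)"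
    have "(wedge r P Q * wedge r P Q) $$ (2*r - j, j) = 0" unfolding h using j' j(1) by simp
    then show False using ne by simp
  qed
qed

section \<open>The closure of the orbit\<close>

lemma wedge_sq_zero_isotropic:
  assumes s: "s < nat_dim r" and t: "t < nat_dim r" and D: "P s * Q t - Q s * P t \<noteq> 0"
    and sq: "wedge r P Q * wedge r P Q = 0\<^sub>m (nat_dim r) (nat_dim r)"
  shows "Jpair r P P = 0" "Jpair r P Q = 0" "Jpair r Q Q = 0"
proof -
  define \<alpha> where "\<alpha> j = Jpair r Q P * Q j - Jpair r Q Q * P j" for j
  define \<beta> where "\<beta> j = Jpair r P P * Q j - Jpair r P Q * P j" for j
  have ent: "P (2*r - i) * \<alpha> j - Q (2*r - i) * \<beta> j = 0" if "i < nat_dim r" "j < nat_dim r" for i j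
  proof -
    have "(wedge r P Q * wedge r P Q) $$ (i,j) = 0" unfolding sq using that by simp
    then show ?thesis unfolding wedge_sq index_wedge2[OF that] \<alpha>_def \<beta>_def .
  qed
  have s': "2*r - s < nat_dim r" and t': "2*r - t < nat_dim r" by (auto simp: nat_dim_def)
  have ss: "2*r - (2*r - s) = s" and tt: "2*r - (2*r - t) = t" using s t by (auto simp: nat_dim_def)
  have ab: "\<alpha> j = 0 \<and> \<beta> j = 0" if j: "j < nat_dim r" for j
  proof (rule cramer2_homogeneous[of "P s" _ "- Q s" _ "P t" "- Q t"])
    show "P s * \<alpha> j + - Q s * \<beta> j = 0" using ent[OF s' j] unfolding ss by simp
    show "P t * \<alpha> j + - Q t * \<beta> j = 0" using ent[OF t' j] unfolding tt by simp
    show "P s * - Q t - - Q s * P t \<noteq> 0" using D by (simp add: algebra_simps)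
  qed
  have "Jpair r Q P = 0 \<and> - Jpair r Q Q = 0"
  proof (rule cramer2_homogeneous[of "Q s" _ "P s" _ "Q t" "P t"])
    show "Q s * Jpair r Q P + P s * - Jpair r Q Q = 0" using ab[OF s] unfolding \<alpha>_def by (simp add: algebra_simps)
    show "Q t * Jpair r Q P + P t * - Jpair r Q Q = 0" using ab[OF t] unfolding \<alpha>_def by (simp add: algebra_simps)
    show "Q s * P t - P s * Q t \<noteq> 0" using D by (simp add: algebra_simps)
  qed
  then have g1: "Jpair r P Q = 0" and g2: "Jpair r Q Q = 0" using Jpair_sym[of r Q P] by auto
  show "Jpair r P Q = 0" "Jpair r Q Q = 0" using g1 g2 by auto
  have "Jpair r P P * Q s = 0" "Jpair r P P * Q t = 0" using ab[OF s] ab[OF t] g1 unfolding \<beta>_def by auto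
  moreover have "Q s \<noteq> 0 \<or> Q t \<noteq> 0" using D by auto
  ultimately show "Jpair r P P = 0" by auto
qed

lemma norm_index_wedge2_le:
  assumes "i < nat_dim r" "j < nat_dim r"
  shows "cmod (wedge2 r P Q U V $$ (i, j)) \<le> cmod (P (2*r - i)) * cmod (U j) + cmod (Q (2*r - i)) * cmod (V j)"
  using assms by (simp add: index_wedge2) (metis norm_mult norm_triangle_ineq4)

lemma zero_in_closure_orbit_3_1:
  assumes r1: "r \<ge> 1"
  shows "0\<^sub>m (nat_dim r) (nat_dim r) \<in> mat_closure (nat_dim r) (orbit_3_1 r)"
  unfolding mat_closure_def
proof (intro CollectI conjI allI impI)
  fix \<epsilon> :: real assume e: "\<epsilon> > 0"
  define P where "P k = (if k = 0 then complex_of_real (\<epsilon> / 4) else 0)" for k :: nat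
  define Q where "Q k = (if k = r then 1 else (0::complex))" for k :: nat
  have n0: "0 < nat_dim r" and nr: "r < nat_dim r" by (auto simp: nat_dim_def)
  have pp: "Jpair r P P = 0" and pq: "Jpair r P Q = 0" unfolding Jpair_def
    by (rule sum.neutral, use r1 in \<open>auto simp: P_def Q_def\<close>)+
  have "Jpair r Q Q = (\<Sum>c<nat_dim r. if c = r then 1 else 0)" unfolding Jpair_def
    by (rule sum.cong) (auto simp: Q_def)
  then have qq: "Jpair r Q Q \<noteq> 0" using nr by simp
  have "P 0 \<noteq> 0" unfolding P_def using e by simp
  then have orb: "wedge r P Q \<in> orbit_3_1 r" by (rule isotropic_wedge_in_orbit_3_1[OF r1 pp pq qq n0])
  have "cmod (0\<^sub>m (nat_dim r) (nat_dim r) $$ (i, j) - wedge r P Q $$ (i, j)) < \<epsilon>"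
    if "i < nat_dim r" "j < nat_dim r" for i j
  proof -
    have bP: "cmod (P k) \<le> \<epsilon> / 4" and bQ: "cmod (Q k) \<le> 1" for k
      unfolding P_def Q_def using e by auto
    have "cmod (wedge r P Q $$ (i, j)) \<le> cmod (P (2*r - i)) * cmod (Q j) + cmod (Q (2*r - i)) * cmod (P j)"
      by (rule norm_index_wedge2_le[OF that])
    also have "\<dots> \<le> \<epsilon> / 4 * 1 + 1 * (\<epsilon> / 4)"
      by (intro add_mono mult_mono bP bQ) (use e in auto)
    finally show ?thesis using that e by simp
  qed
  then show "\<exists>y\<in>orbit_3_1 r. \<forall>i<nat_dim r. \<forall>j<nat_dim r.
      cmod (0\<^sub>m (nat_dim r) (nat_dim r) $$ (i, j) - y $$ (i, j)) < \<epsilon>"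
    using orb by blast
qed simp

(* A vector orthogonal to P under Jpair with Jpair Q (isotropic_partner r P s t) equal to
   -(P s * Q t - Q s * P t); moving Q in its direction makes Q non-isotropic. *)
definition isotropic_partner :: "nat \<Rightarrow> (nat \<Rightarrow> complex) \<Rightarrow> nat \<Rightarrow> nat \<Rightarrow> nat \<Rightarrow> complex" where
  "isotropic_partner r P s t c = (if c = 2*r - s then P t else if c = 2*r - t then - P s else 0)"

lemma perturbed_wedge_in_orbit_3_1:
  assumes r1: "r \<ge> 1" and s: "s < nat_dim r" and t: "t < nat_dim r"
    and D: "P s * Q t - Q s * P t \<noteq> 0"
    and pp: "Jpair r P P = 0" and pq: "Jpair r P Q = 0" and qq: "Jpair r Q Q = 0"
    and k: "k \<noteq> 0"
    and small: "cmod k * cmod (Jpair r (isotropic_partner r P s t) (isotropic_partner r P s t))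
      < 2 * cmod (P s * Q t - Q s * P t)"
  shows "wedge r P (\<lambda>c. Q c + k * isotropic_partner r P s t c) \<in> orbit_3_1 r"
proof -
  define z where "z = isotropic_partner r P s t"
  define Q' where "Q' = (\<lambda>c. Q c + k * z c)"
  define Dv where "Dv = P s * Q t - Q s * P t"
  have st: "s \<noteq> t" using D by auto
  have Pz: "Jpair r P z = 0"
    unfolding z_def isotropic_partner_def Jpair_two_point[OF s t st] by (simp add: algebra_simps)
  have Qz: "Jpair r Q z = - Dv"
    unfolding z_def isotropic_partner_def Jpair_two_point[OF s t st] Dv_def by (simp add: algebra_simps)
  have pq': "Jpair r P Q' = 0" unfolding Q'_def Jpair_add_scaled pq Pz by simp
  have "Jpair r Q' Q' = Jpair r Q Q + 2 * k * Jpair r Q z + k * k * Jpair r z z"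
    unfolding Q'_def Jpair_add_scaled Jpair_sym[of r "\<lambda>c. Q c + k * z c"] Jpair_sym[of r z Q]
    by (simp add: algebra_simps)
  then have qq': "Jpair r Q' Q' = k * (k * Jpair r z z - 2 * Dv)"
    unfolding qq Qz by (simp add: algebra_simps)
  have "cmod (k * Jpair r z z) < cmod (2 * Dv)"
    using small unfolding z_def Dv_def[symmetric] by (simp add: norm_mult)
  then have "k * Jpair r z z - 2 * Dv \<noteq> 0" by auto
  then have qq'_nz: "Jpair r Q' Q' \<noteq> 0" unfolding qq' using k by simp
  obtain j where j: "j < nat_dim r" "P j \<noteq> 0"
    using D s t by (cases "P s = 0") auto
  show ?thesis
    using isotropic_wedge_in_orbit_3_1[OF r1 pp pq' qq'_nz j] unfolding Q'_def z_def .
qed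

lemma norm_index_wedge_perturb_le:
  assumes i: "i < nat_dim r" and j: "j < nat_dim r"
    and bP: "\<And>c. c < nat_dim r \<Longrightarrow> cmod (P c) \<le> B" and bz: "\<And>c. cmod (z c) \<le> B"
  shows "cmod (wedge r P Q $$ (i, j) - wedge r P (\<lambda>c. Q c + k * z c) $$ (i, j)) \<le> cmod k * (2 * B^2)"
proof -
  have "wedge r P Q $$ (i, j) - wedge r P (\<lambda>c. Q c + k * z c) $$ (i, j) = - k * wedge r P z $$ (i, j)"
    using i j by (simp add: index_wedge2 algebra_simps)
  moreover have "cmod (wedge r P z $$ (i, j)) \<le> 2 * B^2"
  proof -
    have a: "2*r - i < nat_dim r" by (simp add: nat_dim_def)
    have "cmod (wedge r P z $$ (i, j)) \<le> cmod (P (2*r - i)) * cmod (z j) + cmod (z (2*r - i)) * cmod (P j)"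
      by (rule norm_index_wedge2_le[OF i j])
    also have "\<dots> \<le> B * B + B * B"
      using order_trans[OF norm_ge_zero bz[of 0]] by (intro add_mono mult_mono bP[OF a] bP[OF j] bz) auto
    finally show ?thesis by (simp add: power2_eq_square)
  qed
  ultimately show ?thesis by (simp add: norm_mult mult_left_mono)
qed

lemma isotropic_wedge_in_closure_orbit_3_1:
  assumes r1: "r \<ge> 1" and s: "s < nat_dim r" and t: "t < nat_dim r"
    and D: "P s * Q t - Q s * P t \<noteq> 0"
    and pp: "Jpair r P P = 0" and pq: "Jpair r P Q = 0" and qq: "Jpair r Q Q = 0"
  shows "wedge r P Q \<in> mat_closure (nat_dim r) (orbit_3_1 r)"
  unfolding mat_closure_def
proof (intro CollectI conjI allI impI)
  fix \<epsilon> :: real assume e: "\<epsilon> > 0"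
  let ?n = "nat_dim r"
  define z where "z = isotropic_partner r P s t"
  define B where "B = 1 + (\<Sum>c<?n. cmod (P c))"
  have B1: "B \<ge> 1" unfolding B_def by (simp add: sum_nonneg)
  have bP: "cmod (P c) \<le> B" if "c < ?n" for c
    using member_le_sum[of c "{..<?n}" "\<lambda>c. cmod (P c)"] that unfolding B_def by simp
  have bz: "cmod (z c) \<le> B" for c unfolding z_def isotropic_partner_def using bP[OF s] bP[OF t] B1 by auto
  define G where "G = cmod (Jpair r z z)"
  define d where "d = cmod (P s * Q t - Q s * P t)"
  define \<tau> where "\<tau> = min (\<epsilon> / (4 * B^2)) (d / (G + 1))"
  have G: "G \<ge> 0" unfolding G_def by simp
  have d: "d > 0" unfolding d_def using D by simp
  have \<tau>: "\<tau> > 0" unfolding \<tau>_def using e B1 d G by simp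
  have close: "\<tau> * (2 * B^2) < \<epsilon>"
  proof -
    have "\<tau> * (2 * B^2) \<le> \<epsilon> / (4 * B^2) * (2 * B^2)"
      unfolding \<tau>_def by (intro mult_right_mono) auto
    also have "\<dots> < \<epsilon>" using e B1 by (simp add: field_simps)
    finally show ?thesis .
  qed
  have "\<tau> * G \<le> d / (G + 1) * G"
    unfolding \<tau>_def by (intro mult_right_mono G) simp
  also have "\<dots> < d / (G + 1) * (G + 1)"
    using d G by (intro mult_strict_left_mono) auto
  also have "\<dots> < 2 * d" using d G by simp
  finally have "cmod (complex_of_real \<tau>) * G < 2 * d" using \<tau> by simp
  then have orb: "wedge r P (\<lambda>c. Q c + complex_of_real \<tau> * z c) \<in> orbit_3_1 r"
    using perturbed_wedge_in_orbit_3_1[OF r1 s t D pp pq qq, of "complex_of_real \<tau>"] \<tau>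
    unfolding z_def G_def d_def by simp
  have "cmod (wedge r P Q $$ (i, j) - wedge r P (\<lambda>c. Q c + complex_of_real \<tau> * z c) $$ (i, j)) < \<epsilon>"
    if i: "i < ?n" and j: "j < ?n" for i j
    using norm_index_wedge_perturb_le[where P = P and z = z and Q = Q and k = "complex_of_real \<tau>", OF i j bP bz] \<tau> close
    by (simp add: mult.commute)
  then show "\<exists>y\<in>orbit_3_1 r. \<forall>i<?n. \<forall>j<?n. cmod (wedge r P Q $$ (i, j) - y $$ (i, j)) < \<epsilon>"
    using orb by blast
qed simp

lemma nilpotent_wedge_in_closure_orbit_3_1:
  assumes r1: "r \<ge> 1" and nz: "wedge r P Q \<noteq> 0\<^sub>m (nat_dim r) (nat_dim r)"
    and nil: "wedge r P Q ^\<^sub>m k = 0\<^sub>m (nat_dim r) (nat_dim r)"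
  shows "wedge r P Q \<in> mat_closure (nat_dim r) (orbit_3_1 r)"
proof (cases "wedge r P Q * wedge r P Q = 0\<^sub>m (nat_dim r) (nat_dim r)")
  case False
  have "wedge_cube_coeff r P Q = 0"
    by (rule nilpotent_cube_scalar_zero[OF wedge2_carrier wedge_cube nil nz])
  then have "wedge r P Q \<in> orbit_3_1 r" using wedge_in_orbit_3_1[OF r1 _ False] by simp
  then show ?thesis using mat_closure_superset wedge2_carrier by blast
next
  case True
  obtain i t where i: "i < nat_dim r" and t: "t < nat_dim r" and e: "wedge r P Q $$ (i, t) \<noteq> 0"
    using nz wedge2_carrier by (metis eq_matI carrier_matD index_zero_mat)
  define s where "s = 2*r - i"
  have s: "s < nat_dim r" unfolding s_def by (simp add: nat_dim_def)
  have D: "P s * Q t - Q s * P t \<noteq> 0" using e unfolding index_wedge2[OF i t] s_def .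
  show ?thesis
    by (rule isotropic_wedge_in_closure_orbit_3_1[OF r1 s t D wedge_sq_zero_isotropic[OF s t D True]])
qed

theorem lemma7p2:
  fixes r :: nat
  assumes "r \<ge> 3"
  shows "zero_locus_W2 r \<inter> nilcone r \<subseteq> mat_closure (nat_dim r) (orbit_3_1 r)"
proof
  fix x assume "x \<in> zero_locus_W2 r \<inter> nilcone r"
  then have zero: "x \<in> zero_locus_W2 r" and x: "x \<in> so_alg r"
    and nil: "\<exists>k. x ^\<^sub>m k = 0\<^sub>m (nat_dim r) (nat_dim r)"
    unfolding zero_locus_W2_def nilcone_def by auto
  show "x \<in> mat_closure (nat_dim r) (orbit_3_1 r)"
  proof (cases "x = 0\<^sub>m (nat_dim r) (nat_dim r)")
    case True
    then show ?thesis using zero_in_closure_orbit_3_1 assms by simp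
  next
    case False
    obtain P Q where "x = wedge r P Q"
      using wedge_of_plucker_vanish[OF x plucker_vanish_on_zero_locus[OF assms zero] False] by blast
    then show ?thesis using nilpotent_wedge_in_closure_orbit_3_1 False nil assms by auto
  qed
qed

end
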